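(* Let $q\geq2$ be an integer, $z\geq2$ real and $\beta\geq0$, and let $\Gamma_{\beta,q,z}:\mathcal{P}(\{1,\dots,q\})\to\mathbb{R}$ be the free energy $$\Gamma_{\beta,q,z}(\nu)=-\frac{\beta}{z}\sum_{i=1}^q\nu_i^z+\sum_{i=1}^q\nu_i\log(q\nu_i).$$ \begin{enumerate} \item[(i)] Any global minimizer of $\Gamma_{\beta,q,z}$ must have the form $$\bar{\nu}=\Bigl(\tfrac{1}{q}\bigl(1+(q-1)u\bigr),\tfrac{1}{q}(1-u),\dots,\tfrac{1}{q}(1-u)\Bigr)^T\quad\text{with } u\in[0,1),$$ or a point obtained from such a $\bar{\nu}$ by permuting the coordinates. \item[(ii)] There exists a critical inverse temperature $\beta_c(q,z)>0$ such that for $\beta<\beta_c(q,z)$ the global minimizer $\bar{\nu}$ is of the form $\bigl(\tfrac{1}{q}(1+(q-1)u),\tfrac{1}{q}(1-u),\dots,\tfrac{1}{q}(1-u)\bigr)^T$ (up to permutation of coordinates) with $u=0$, i.e. $\bar{\nu}^T=(\frac{1}{q},\dots,\frac{1}{q})$. If $\beta>\beta_c(q,z)$, then the global minimizers are of the form $\bigl(\tfrac{1}{q}(1+(q-1)u),\tfrac{1}{q}(1-u),\dots,\tfrac{1}{q}(1-u)\bigr)^T$ (up to permutation of coordinates) with $u=u(\beta,q,z)$, where $u(\beta,q,z)$ is the largest solution of the mean-field equation $$u=\frac{1-\exp\bigl(\Delta_{\beta,q,z}(u)\bigr)}{1+(q-1)\exp\bigl(\Delta_{\beta,q,z}(u)\bigr)}$$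 with $\Delta_{\beta,q,z}(u):=-\frac{\beta}{q^{z-1}}\left[\bigl(1+(q-1)u\bigr)^{z-1}-\bigl(1-u\bigr)^{z-1}\right]$. \item[(iii)] The function $\beta\mapsto u(\beta,q,z)$ is discontinuous at $\beta_c(q,z)$ for all $z\geq2$ and $q\geq2$ except for the case $(q,z)\in\{2\}\times[2,4]$. \end{enumerate}
   Context: Generalized mean-field $q$-state Potts model on the complete graph with $N$ vertices: $\pi^N_{\beta,q,z}(\xi)\propto\exp(-NF_{\beta,q,z}(L_N^\xi))$ with $F_{\beta,q,z}(\nu)=-\beta\sum_{i=1}^q\nu_i^z/z$ and $L_N^\xi$ the empirical distribution. The free energy $\Gamma_{\beta,q,z}=F_{\beta,q,z}+I(\cdot|\alpha)$, with $I(\cdot|\alpha)$ the relative entropy w.r.t. the uniform distribution $\alpha$ on $\{1,\dots,q\}$, governs (via large deviations and Varadhan's lemma) the limit of $L_N$. *)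

theory Defs
  imports "HOL-Analysis.Analysis"
begin

definition prob_simplex :: "nat \<Rightarrow> (nat \<Rightarrow> real) set" where
  "prob_simplex q = {\<nu>. (\<forall>i\<in>{1..q}. 0 \<le> \<nu> i) \<and> (\<Sum>i=1..q. \<nu> i) = 1
                    \<and> (\<forall>i. i \<notin> {1..q} \<longrightarrow> \<nu> i = 0)}"

text \<open>Free energy Gamma = F + I(.|uniform); note 0 * ln(q*0) = 0.\<close>
definition Gamma :: "real \<Rightarrow> nat \<Rightarrow> real \<Rightarrow> (nat \<Rightarrow> real) \<Rightarrow> real" where
  "Gamma \<beta> q z \<nu> = - (\<beta> / z) * (\<Sum>i=1..q. \<nu> i powr z)
                     + (\<Sum>i=1..q. \<nu> i * ln (real q * \<nu> i))"

definition global_minimizer :: "real \<Rightarrow> nat \<Rightarrow> real \<Rightarrow> (nat \<Rightarrow> real) \<Rightarrow> bool" where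
  "global_minimizer \<beta> q z \<nu> \<longleftrightarrow>
     \<nu> \<in> prob_simplex q \<and> (\<forall>\<mu>\<in>prob_simplex q. Gamma \<beta> q z \<nu> \<le> Gamma \<beta> q z \<mu>)"

definition sym_point :: "nat \<Rightarrow> real \<Rightarrow> (nat \<Rightarrow> real) \<Rightarrow> bool" where
  "sym_point q u \<nu> \<longleftrightarrow> (\<forall>i. i \<notin> {1..q} \<longrightarrow> \<nu> i = 0) \<and>
     (\<exists>k\<in>{1..q}. \<nu> k = (1 + (real q - 1) * u) / real q \<and>
                 (\<forall>j\<in>{1..q} - {k}. \<nu> j = (1 - u) / real q))"

definition Delta :: "real \<Rightarrow> nat \<Rightarrow> real \<Rightarrow> real \<Rightarrow> real" where
  "Delta \<beta> q z u = - (\<beta> / real q powr (z - 1)) *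
     ((1 + (real q - 1) * u) powr (z - 1) - (1 - u) powr (z - 1))"

definition mean_field_eq :: "real \<Rightarrow> nat \<Rightarrow> real \<Rightarrow> real \<Rightarrow> bool" where
  "mean_field_eq \<beta> q z u \<longleftrightarrow>
     u = (1 - exp (Delta \<beta> q z u)) / (1 + (real q - 1) * exp (Delta \<beta> q z u))"

text \<open>Largest solution of the mean-field equation in [0,1] (u = 0 is always a solution).\<close>
definition u_mf :: "real \<Rightarrow> nat \<Rightarrow> real \<Rightarrow> real" where
  "u_mf \<beta> q z = Sup {u \<in> {0..1}. mean_field_eq \<beta> q z u}"

end

theory Submission
  imports Defs "HOL-Real_Asymp.Real_Asymp"
begin

text \<open>
  \<open>Gamma\<close> is the sum over the coordinates of the single-site energy
  \<open>\<psi>(x) = -\<beta> x\<^sup>z/z + x ln (q x)\<close>. At a minimizer no coordinate vanishes, since \<open>\<psi>\<close> has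
  slope \<open>-\<infinity>\<close> at \<open>0\<close>, and transferring mass between two coordinates shows that all
  coordinates share the value of \<open>\<phi>(x) = ln x - \<beta> x\<^bsup>z-1\<^esup>\<close>, the derivative of \<open>\<psi>\<close> up to a
  constant. As \<open>\<phi>\<close> has at most one critical point it takes each value at most twice, and the
  larger of two such values cannot be taken twice without allowing a profitable spreading of
  mass. So minimizers lie on the curve \<open>\<nu>(u)\<close> of the statement, and it remains to minimize
  \<open>G(u) = Gamma (\<nu>(u))\<close> over \<open>[0,1]\<close>.

  \<open>G'\<close> is a positive multiple of the mean-field residual \<open>g\<close>, whose zeros solve the mean-field
  equation, and \<open>g'\<close> has the sign of \<open>q - \<kappa> W\<close> for a weight \<open>W\<close> that first increases and then
  decreases. \<open>G(u) - G(0)\<close> is affine in \<open>\<beta>\<close> with negative slope for \<open>u > 0\<close>, so the infimum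
  \<open>\<beta>\<^sub>c\<close> of the ratio of its coefficients separates the regime where \<open>u = 0\<close> is the unique
  minimizer from the one where some \<open>u > 0\<close> beats it, and the shape of \<open>W\<close> makes this
  minimizer the largest zero of \<open>g\<close>. \<open>W\<close> has an interior maximum unless \<open>q = 2\<close> and
  \<open>z \<le> 4\<close>: in that case \<open>g > 0\<close> on \<open>(0,1)\<close> at \<open>\<beta>\<^sub>c\<close> and the minimizer tends to \<open>0\<close> as
  \<open>\<beta> \<down> \<beta>\<^sub>c\<close>; otherwise the sign pattern of \<open>g'\<close> below the minimizer keeps it beyond
  the maximum of \<open>W\<close>.
\<close>

lemma DERIV_pos_imp_less:
  fixes f :: "real \<Rightarrow> real"
  assumes "a < b" and "\<And>x. a \<le> x \<Longrightarrow> x \<le> b \<Longrightarrow> (f has_real_derivative f' x) (at x)"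
    and "\<And>x. a < x \<Longrightarrow> x < b \<Longrightarrow> f' x > 0"
  shows "f a < f b"
proof (rule DERIV_pos_imp_increasing_open[OF assms(1)])
  fix x assume "a < x" "x < b"
  then show "\<exists>y. (f has_real_derivative y) (at x) \<and> 0 < y"
    using assms(2,3)[of x] by (intro exI[of _ "f' x"]) auto
next
  show "continuous_on {a..b} f"
    using assms(2) by (intro DERIV_atLeastAtMost_imp_continuous_on) auto
qed

lemma DERIV_neg_imp_less:
  fixes f :: "real \<Rightarrow> real"
  assumes "a < b" and "\<And>x. a \<le> x \<Longrightarrow> x \<le> b \<Longrightarrow> (f has_real_derivative f' x) (at x)"
    and "\<And>x. a < x \<Longrightarrow> x < b \<Longrightarrow> f' x < 0"
  shows "f b < f a"
  using DERIV_pos_imp_less[of a b "\<lambda>x. - f x" "\<lambda>x. - f' x"] assms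
  by (auto intro: DERIV_minus)

lemma sign_change_of_unimodal:
  fixes f :: "real \<Rightarrow> real"
  assumes d: "\<And>x. x \<ge> a \<Longrightarrow> (f has_real_derivative f' x) (at x)"
    and c: "c \<ge> a" "\<And>x. a < x \<Longrightarrow> x < c \<Longrightarrow> f' x > 0" "\<And>x. x > c \<Longrightarrow> f' x < 0"
    and fa: "f a \<ge> 0" and R: "R > a" "f R < 0"
  shows "\<exists>r\<ge>c. f r = 0 \<and> (\<forall>x. a < x \<and> x < r \<longrightarrow> f x > 0) \<and> (\<forall>x>r. f x < 0)"
proof -
  have left: "f x > 0" if "a < x" "x \<le> c" for x
    using DERIV_pos_imp_less[of a x f f'] d c fa that by force
  have dec: "f y < f x" if "c \<le> x" "x < y" for x y
    using DERIV_neg_imp_less[of x y f f'] d c that by force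
  have "f c \<ge> 0" using left[of c] fa c by (cases "c = a") auto
  moreover have "R > c" using left[of R] R by (cases "R \<le> c") auto
  ultimately obtain r where r: "c \<le> r" "r \<le> R" "f r = 0"
    using IVT2[of f R 0 c] R d c DERIV_isCont by (smt (verit))
  have "f x > 0" if "a < x" "x < r" for x
    using left[OF that(1)] dec[of x r] that r by (cases "x \<le> c") auto
  moreover have "f x < 0" if "x > r" for x
    using dec[OF r(1) that] r by simp
  ultimately show ?thesis using r by blast
qed

section \<open>Single-site energy\<close>

definition site_energy :: "real \<Rightarrow> nat \<Rightarrow> real \<Rightarrow> real \<Rightarrow> real" where
  "site_energy \<beta> q z x = - (\<beta> / z) * x powr z + x * ln (real q * x)"

definition site_slope :: "real \<Rightarrow> real \<Rightarrow> real \<Rightarrow> real" where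
  "site_slope \<beta> z x = ln x - \<beta> * x powr (z - 1)"

lemma Gamma_eq_sum_site_energy: "Gamma \<beta> q z \<nu> = (\<Sum>i=1..q. site_energy \<beta> q z (\<nu> i))"
  unfolding Gamma_def site_energy_def sum.distrib by (simp add: sum_distrib_left)

lemma site_energy_0 [simp]: "site_energy \<beta> q z 0 = 0"
  by (simp add: site_energy_def)

lemma has_real_derivative_site_energy:
  assumes "x > 0" "q > 0" "z \<noteq> 0"
  shows "(site_energy \<beta> q z has_real_derivative site_slope \<beta> z x + ln (real q) + 1) (at x)"
proof -
  have "((\<lambda>x. - (\<beta> / z) * x powr z + x * ln (real q * x)) has_real_derivative
      - (\<beta> / z) * (z * x powr (z - 1)) + (1 * ln (real q * x) + x * (real q / (real q * x)))) (at x)"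
    using assms by (auto intro!: derivative_eq_intros)
  moreover have "- (\<beta> / z) * (z * x powr (z - 1)) + (1 * ln (real q * x) + x * (real q / (real q * x)))
      = site_slope \<beta> z x + ln (real q) + 1"
    using assms by (simp add: site_slope_def ln_mult field_simps)
  ultimately show ?thesis unfolding site_energy_def by simp
qed

lemma has_real_derivative_site_slope:
  assumes "x > 0"
  shows "(site_slope \<beta> z has_real_derivative (1 - \<beta> * (z - 1) * x powr (z - 1)) / x) (at x)"
proof -
  have "((\<lambda>x. ln x - \<beta> * x powr (z - 1)) has_real_derivative 1/x - \<beta> * ((z-1) * x powr (z - 1 - 1))) (at x)"
    using assms by (intro DERIV_diff DERIV_ln_divide DERIV_cmult has_real_derivative_powr) auto
  moreover have "1/x - \<beta> * ((z-1) * x powr (z - 1 - 1)) = (1 - \<beta> * (z - 1) * x powr (z - 1)) / x"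
    using assms by (simp add: powr_diff field_simps) (simp add: power2_eq_square algebra_simps)
  ultimately show ?thesis unfolding site_slope_def by simp
qed

lemma continuous_on_x_ln_cx:
  assumes c: "c > 0"
  shows "continuous_on {0..} (\<lambda>x::real. x * ln (c * x))"
  unfolding continuous_on_def
proof (intro ballI)
  fix x :: real assume x: "x \<in> {0..}"
  show "((\<lambda>x. x * ln (c * x)) \<longlongrightarrow> x * ln (c * x)) (at x within {0..})"
  proof (cases "x = 0")
    case True
    have "((\<lambda>x::real. x * ln c + x * ln x) \<longlongrightarrow> 0) (at_right 0)"
      by real_asymp
    then have "((\<lambda>x::real. x * ln (c*x)) \<longlongrightarrow> 0) (at_right 0)"
      by (rule Lim_transform_eventually)
        (use c in \<open>auto simp: eventually_at_right_field ln_mult field_simps intro!: exI[of _ 1]\<close>)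
    then show ?thesis using True by (simp add: at_within_Ici_at_right)
  next
    case False
    then have "isCont (\<lambda>x. x * ln (c * x)) x"
      using c x by (auto intro!: continuous_intros)
    then show ?thesis by (meson continuous_at_imp_continuous_at_within continuous_within)
  qed
qed

lemma continuous_on_site_energy:
  assumes "q > 0" "z > 0"
  shows "continuous_on {0..} (site_energy \<beta> q z)"
proof -
  have "continuous_on {0..} (\<lambda>x::real. x powr z)"
    using assms by (intro continuous_on_powr') (auto intro: continuous_intros)
  moreover have "continuous_on {0..} (\<lambda>x::real. x * ln (real q * x))"
    using assms by (intro continuous_on_x_ln_cx) auto
  ultimately show ?thesis
    unfolding site_energy_def[abs_def] by (intro continuous_on_add continuous_on_mult_left)
qed

lemma site_energy_split_decreases:
  assumes q: "q > 0" and z: "z > 1" and b: "\<beta> \<ge> 0" and y: "0 < y" "y \<le> 1"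
  shows "\<exists>t. 0 < t \<and> t \<le> y \<and> site_energy \<beta> q z t + site_energy \<beta> q z (y - t) < site_energy \<beta> q z y"
proof -
  define A where "A = \<beta> - ln (real q * y / 2) - 1"
  \<comment> \<open>removing mass \<open>t\<close> at \<open>y\<close> costs at most \<open>t A\<close>; an empty site gains \<open>t (A + 1)\<close> from it\<close>
  define t where "t = min (y/2) (exp (-A-1) / real q)"
  have t0: "0 < t" using y q by (simp add: t_def)
  have ty: "t \<le> y/2" unfolding t_def by (rule min.cobounded1)
  obtain \<xi> where xi: "\<xi> > y - t" "\<xi> < y"
    and eq: "site_energy \<beta> q z y - site_energy \<beta> q z (y-t) = t * (site_slope \<beta> z \<xi> + ln (real q) + 1)"
    using MVT2[of "y - t" y "site_energy \<beta> q z" "\<lambda>x. site_slope \<beta> z x + ln (real q) + 1"]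
      has_real_derivative_site_energy t0 ty y q z by auto
  have xi2: "\<xi> > y/2" using xi ty by simp
  have "\<xi> powr (z-1) \<le> 1" using xi y xi2 z by (intro powr_le1) auto
  then have "\<beta> * \<xi> powr (z-1) \<le> \<beta>" using b by (simp add: mult_left_le)
  moreover have "ln (y/2) \<le> ln \<xi>" using xi2 y by simp
  ultimately have "site_slope \<beta> z \<xi> + ln (real q) + 1 \<ge> - A"
    unfolding site_slope_def A_def using y q by (simp add: ln_mult ln_div)
  then have "-(t * A) \<le> t * (site_slope \<beta> z \<xi> + ln (real q) + 1)"
    using mult_left_mono[of "-A" _ t] t0 by simp
  then have far: "site_energy \<beta> q z (y-t) - site_energy \<beta> q z y \<le> t * A"
    using eq by linarith
  have "ln (real q * t) \<le> -A - 1"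
    using t0 q ln_le_cancel_iff[of "real q * t" "exp (-A-1)"]
    by (auto simp: t_def min_def field_simps split: if_splits)
  then have "t * ln (real q * t) \<le> t * (-A-1)"
    using t0 by (simp add: mult_left_mono)
  moreover have "site_energy \<beta> q z t \<le> t * ln (real q * t)"
    unfolding site_energy_def using b z t0 by (simp add: mult_nonneg_nonneg)
  ultimately show ?thesis using far t0 ty y by (intro exI[of _ t]) (auto simp: algebra_simps)
qed

lemma site_slope_eq_of_pair_min:
  assumes q: "q > 0" and z: "z \<noteq> 0" and x: "x > 0" and y: "y > 0"
    and min: "\<And>t. - x \<le> t \<Longrightarrow> t \<le> y \<Longrightarrow>
      site_energy \<beta> q z x + site_energy \<beta> q z y \<le> site_energy \<beta> q z (x + t) + site_energy \<beta> q z (y - t)"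
  shows "site_slope \<beta> z x = site_slope \<beta> z y"
proof -
  have "((\<lambda>t. site_energy \<beta> q z (x + t) + site_energy \<beta> q z (y - t)) has_real_derivative
      (site_slope \<beta> z x + ln (real q) + 1) * 1 + (site_slope \<beta> z y + ln (real q) + 1) * (-1)) (at 0)"
    using has_real_derivative_site_energy[OF _ q z, of "x + 0" \<beta>] has_real_derivative_site_energy[OF _ q z, of "y - 0" \<beta>] x y
    by (intro DERIV_add DERIV_chain2[where f = "site_energy \<beta> q z"]) (auto intro!: derivative_eq_intros)
  moreover have "\<forall>t. \<bar>0 - t\<bar> < min x y \<longrightarrow>
      site_energy \<beta> q z (x + 0) + site_energy \<beta> q z (y - 0) \<le> site_energy \<beta> q z (x + t) + site_energy \<beta> q z (y - t)"
    using min by auto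
  ultimately have "(site_slope \<beta> z x + ln (real q) + 1) * 1 + (site_slope \<beta> z y + ln (real q) + 1) * (-1) = 0"
    using x y by (intro DERIV_local_min[of _ _ 0 "min x y"]) auto
  then show ?thesis by simp
qed

lemma site_slope_eq_imp_critical:
  assumes ab: "0 < a" "a < b" and eq: "site_slope \<beta> z a = site_slope \<beta> z b"
  shows "\<exists>\<xi>>a. \<xi> < b \<and> \<beta> * (z - 1) * \<xi> powr (z - 1) = 1"
proof -
  have d: "(site_slope \<beta> z has_real_derivative (1 - \<beta> * (z - 1) * x powr (z - 1)) / x) (at x)"
    if "a \<le> x" for x
    using that ab by (intro has_real_derivative_site_slope) simp
  obtain \<xi> where xi: "\<xi> > a" "\<xi> < b" "(site_slope \<beta> z has_real_derivative 0) (at \<xi>)"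
    using Rolle[OF ab(2) eq] d ab DERIV_atLeastAtMost_imp_continuous_on[of a b "site_slope \<beta> z"]
    by (meson atLeastAtMost_iff less_imp_le real_differentiable_def)
  then have "(1 - \<beta> * (z - 1) * \<xi> powr (z - 1)) / \<xi> = 0"
    using DERIV_unique[OF d[of \<xi>]] by simp
  then show ?thesis using xi ab by auto
qed

lemma site_slope_critical_unique:
  fixes x y :: real
  assumes z: "z > 1" and "0 < x" "x < y"
    and "\<beta> * (z - 1) * x powr (z - 1) = 1"
  shows "\<beta> * (z - 1) * y powr (z - 1) > 1"
proof -
  have "x powr (z - 1) > 0" using assms(2) by simp
  then have "\<beta> * (z - 1) > 0"
    using assms(4) by (metis zero_less_mult_pos2 zero_less_one)
  moreover have "x powr (z - 1) < y powr (z - 1)"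
    using assms by (intro powr_less_mono2) auto
  ultimately show ?thesis
    using assms(4) mult_strict_left_mono by fastforce
qed

lemma site_slope_not_thrice:
  assumes z: "z > 1" and "0 < x" "x < y" "y < w"
    and "site_slope \<beta> z x = site_slope \<beta> z y" "site_slope \<beta> z y = site_slope \<beta> z w"
  shows False
proof -
  obtain \<xi>1 where 1: "\<xi>1 > x" "\<xi>1 < y" "\<beta> * (z - 1) * \<xi>1 powr (z - 1) = 1"
    using site_slope_eq_imp_critical[of x y \<beta> z] assms by auto
  obtain \<xi>2 where 2: "\<xi>2 > y" "\<xi>2 < w" "\<beta> * (z - 1) * \<xi>2 powr (z - 1) = 1"
    using site_slope_eq_imp_critical[of y w \<beta> z] assms by auto
  show False
    using site_slope_critical_unique[OF z _ _ 1(3), of \<xi>2] 1 2 assms by simp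
qed

text \<open>Beyond a critical point of the slope the energy is strictly concave, so two equal masses
  there can always be spread apart with a gain.\<close>
lemma site_energy_spread_decreases:
  assumes q: "q > 0" and z: "z > 1" and ab: "0 < a" "a < b"
    and eq: "site_slope \<beta> z a = site_slope \<beta> z b"
  shows "\<exists>t. 0 < t \<and> t < b \<and>
    site_energy \<beta> q z (b + t) + site_energy \<beta> q z (b - t) < site_energy \<beta> q z b + site_energy \<beta> q z b"
proof -
  obtain \<xi> where xi: "\<xi> > a" "\<xi> < b" "\<beta> * (z - 1) * \<xi> powr (z - 1) = 1"
    using site_slope_eq_imp_critical[OF ab eq] by auto
  have slope_dec: "site_slope \<beta> z y < site_slope \<beta> z x" if "\<xi> \<le> x" "x < y" for x y
  proof (rule DERIV_neg_imp_decreasing_open[OF that(2)])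
    fix s assume "x < s" "s < y"
    then have "\<beta> * (z - 1) * s powr (z - 1) > 1"
      using site_slope_critical_unique[OF z _ _ xi(3)] xi ab that by auto
    moreover have "s > 0" using \<open>x < s\<close> that xi ab by simp
    ultimately show "\<exists>d. (site_slope \<beta> z has_real_derivative d) (at s) \<and> d < 0"
      using has_real_derivative_site_slope[of s \<beta> z] by (auto intro!: exI simp: divide_neg_pos)
  next
    show "continuous_on {x..y} (site_slope \<beta> z)"
      using that xi ab unfolding site_slope_def[abs_def] by (intro continuous_intros) auto
  qed
  define t where "t = (b - \<xi>) / 2"
  have t: "0 < t" "t < b" using xi ab by (auto simp: t_def)
  define f where "f = (\<lambda>s. site_energy \<beta> q z (b + s) + site_energy \<beta> q z (b - s))"
  have fd: "(f has_real_derivative site_slope \<beta> z (b + s) - site_slope \<beta> z (b - s)) (at s)"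
    if "0 \<le> s" "s < b" for s
    using has_real_derivative_site_energy[OF _ q, of "b + s" z \<beta>] has_real_derivative_site_energy[OF _ q, of "b - s" z \<beta>]
      that ab z unfolding f_def
    by (auto intro!: derivative_eq_intros DERIV_chain2[where f = "site_energy \<beta> q z"] simp: algebra_simps)
  have "f t < f 0"
  proof (rule DERIV_neg_imp_decreasing_open[OF t(1)])
    fix s assume s: "0 < s" "s < t"
    have "site_slope \<beta> z (b + s) < site_slope \<beta> z (b - s)"
      using s t_def by (intro slope_dec) auto
    then show "\<exists>d. (f has_real_derivative d) (at s) \<and> d < 0"
      using fd[of s] s t by auto
  next
    show "continuous_on {0..t} f"
      using fd t(2) by (intro DERIV_atLeastAtMost_imp_continuous_on) (meson order_le_less_trans)
  qed
  then show ?thesis using t unfolding f_def by auto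
qed

section \<open>Global minimizers are symmetric\<close>

lemma prob_simplex_le_1:
  assumes "\<nu> \<in> prob_simplex q" "i \<in> {1..q}"
  shows "\<nu> i \<le> 1"
proof -
  have "\<nu> i \<le> (\<Sum>i=1..q. \<nu> i)"
    using assms by (intro member_le_sum) (auto simp: prob_simplex_def)
  then show ?thesis using assms by (simp add: prob_simplex_def)
qed

lemma sum_fun_upd2:
  fixes F :: "'a \<Rightarrow> 'b::ab_group_add"
  assumes "finite S" "j \<in> S" "k \<in> S" "j \<noteq> k"
  shows "(\<Sum>i\<in>S. F ((\<nu>(j := a, k := b)) i)) = (\<Sum>i\<in>S. F (\<nu> i)) - F (\<nu> j) - F (\<nu> k) + F a + F b"
proof -
  have S: "S = insert j (insert k (S - {j, k}))" using assms by auto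
  have "(\<Sum>i\<in>S - {j,k}. F ((\<nu>(j := a, k := b)) i)) = (\<Sum>i\<in>S - {j,k}. F (\<nu> i))"
    by (intro sum.cong) auto
  then show ?thesis
    using assms by (subst (1 2) S) (simp add: sum.insert_if algebra_simps)
qed

lemma transfer_mass_in_prob_simplex:
  assumes "\<nu> \<in> prob_simplex q" "j \<in> {1..q}" "k \<in> {1..q}" "j \<noteq> k"
    "0 \<le> \<nu> j + t" "0 \<le> \<nu> k - t"
  shows "\<nu>(j := \<nu> j + t, k := \<nu> k - t) \<in> prob_simplex q"
  using assms sum_fun_upd2[of "{1..q}" j k "\<lambda>x. x" \<nu> "\<nu> j + t" "\<nu> k - t"]
  unfolding prob_simplex_def by auto

lemma Gamma_transfer_mass:
  assumes "j \<in> {1..q}" "k \<in> {1..q}" "j \<noteq> k"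
  shows "Gamma \<beta> q z (\<nu>(j := \<nu> j + t, k := \<nu> k - t)) =
           Gamma \<beta> q z \<nu> - site_energy \<beta> q z (\<nu> j) - site_energy \<beta> q z (\<nu> k)
           + site_energy \<beta> q z (\<nu> j + t) + site_energy \<beta> q z (\<nu> k - t)"
  unfolding Gamma_eq_sum_site_energy using sum_fun_upd2[of "{1..q}" j k "site_energy \<beta> q z"] assms
  by simp

lemma global_minimizer_transfer_mass:
  assumes "global_minimizer \<beta> q z \<nu>" "j \<in> {1..q}" "k \<in> {1..q}" "j \<noteq> k"
    "- \<nu> j \<le> t" "t \<le> \<nu> k"
  shows "site_energy \<beta> q z (\<nu> j) + site_energy \<beta> q z (\<nu> k)
      \<le> site_energy \<beta> q z (\<nu> j + t) + site_energy \<beta> q z (\<nu> k - t)"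
proof -
  have "Gamma \<beta> q z \<nu> \<le> Gamma \<beta> q z (\<nu>(j := \<nu> j + t, k := \<nu> k - t))"
    using assms transfer_mass_in_prob_simplex[of \<nu> q j k t] unfolding global_minimizer_def by auto
  then show ?thesis using Gamma_transfer_mass[OF assms(2-4), of \<beta> z \<nu> t] by simp
qed

lemma global_minimizer_pos:
  assumes q: "q > 0" and z: "z > 1" and b: "\<beta> \<ge> 0" and gm: "global_minimizer \<beta> q z \<nu>"
    and j: "j \<in> {1..q}"
  shows "\<nu> j > 0"
proof (rule ccontr)
  assume "\<not> \<nu> j > 0"
  moreover have nu: "\<nu> \<in> prob_simplex q" using gm by (simp add: global_minimizer_def)
  ultimately have j0: "\<nu> j = 0" using j by (simp add: prob_simplex_def order.antisym)
  have "\<not> (\<forall>k\<in>{1..q}. \<nu> k = 0)"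
  proof
    assume "\<forall>k\<in>{1..q}. \<nu> k = 0"
    then have "(\<Sum>i=1..q. \<nu> i) = 0" by simp
    then show False using nu by (simp add: prob_simplex_def)
  qed
  then obtain k where k: "k \<in> {1..q}" "\<nu> k > 0"
    using nu by (auto simp: prob_simplex_def order.order_iff_strict)
  obtain t where t: "0 < t" "t \<le> \<nu> k"
    "site_energy \<beta> q z t + site_energy \<beta> q z (\<nu> k - t) < site_energy \<beta> q z (\<nu> k)"
    using site_energy_split_decreases[OF q z b k(2) prob_simplex_le_1[OF nu k(1)]] by auto
  have "j \<noteq> k" using j0 k(2) by auto
  show False
    using global_minimizer_transfer_mass[OF gm j k(1) \<open>j \<noteq> k\<close>, of t] t j0 by simp
qed

lemma global_minimizer_site_slope_eq:
  assumes q: "q > 0" and z: "z > 1" and b: "\<beta> \<ge> 0" and gm: "global_minimizer \<beta> q z \<nu>"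
    and jk: "j \<in> {1..q}" "k \<in> {1..q}"
  shows "site_slope \<beta> z (\<nu> j) = site_slope \<beta> z (\<nu> k)"
proof (cases "j = k")
  case False
  show ?thesis
    using global_minimizer_transfer_mass[OF gm jk False] global_minimizer_pos[OF q z b gm] jk z
    by (intro site_slope_eq_of_pair_min[OF q]) auto
qed simp

lemma global_minimizer_eq_below_max:
  assumes q: "q > 0" and z: "z > 1" and b: "\<beta> \<ge> 0" and gm: "global_minimizer \<beta> q z \<nu>"
    and k: "k \<in> {1..q}" "\<forall>i\<in>{1..q}. \<nu> i \<le> \<nu> k"
    and j: "j \<in> {1..q}" "j \<noteq> k" and l: "l \<in> {1..q}" "\<nu> l < \<nu> k"
  shows "\<nu> j = \<nu> l"
proof -
  note slope_eq = global_minimizer_site_slope_eq[OF q z b gm]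
  note pos = global_minimizer_pos[OF q z b gm]
  have "\<nu> j \<noteq> \<nu> k"
  proof
    assume jk: "\<nu> j = \<nu> k"
    obtain t where "0 < t" "t < \<nu> k" "site_energy \<beta> q z (\<nu> k + t) + site_energy \<beta> q z (\<nu> k - t)
        < site_energy \<beta> q z (\<nu> k) + site_energy \<beta> q z (\<nu> k)"
      using site_energy_spread_decreases[OF q z pos[OF l(1)] l(2) slope_eq[OF l(1) k(1)]] by blast
    then show False
      using global_minimizer_transfer_mass[OF gm j(1) k(1) j(2), of t] jk by simp
  qed
  then have jk: "\<nu> j < \<nu> k" using k j by (simp add: order.not_eq_order_implies_strict)
  show "\<nu> j = \<nu> l"
  proof (rule ccontr)
    assume "\<nu> j \<noteq> \<nu> l"
    then consider "\<nu> j < \<nu> l" | "\<nu> l < \<nu> j" by linarith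
    then show False
    proof cases
      case 1
      then show False
        using site_slope_not_thrice[OF z pos[OF j(1)] 1 l(2)] slope_eq[OF j(1) l(1)] slope_eq[OF l(1) k(1)] by simp
    next
      case 2
      then show False
        using site_slope_not_thrice[OF z pos[OF l(1)] 2 jk] slope_eq[OF l(1) j(1)] slope_eq[OF j(1) k(1)] by simp
    qed
  qed
qed

lemma sym_point_of_two_levels:
  assumes q: "q > 0" and \<nu>: "\<nu> \<in> prob_simplex q" and k: "k \<in> {1..q}"
    and a: "\<forall>j\<in>{1..q} - {k}. \<nu> j = a"
  shows "sym_point q (1 - real q * a) \<nu>"
proof -
  have "(\<Sum>i\<in>{1..q} - {k}. \<nu> i) = (real q - 1) * a"
    using a k by (simp add: of_nat_diff)
  then have "\<nu> k = 1 - (real q - 1) * a"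
    using \<nu> k by (simp add: prob_simplex_def sum.remove)
  also have "\<dots> = (1 + (real q - 1) * (1 - real q * a)) / real q"
    using q by (simp add: field_simps)
  finally have "\<nu> k = (1 + (real q - 1) * (1 - real q * a)) / real q" .
  moreover have "(1 - (1 - real q * a)) / real q = a" using q by simp
  ultimately show ?thesis
    using \<nu> k a unfolding sym_point_def prob_simplex_def by auto
qed

theorem global_minimizer_sym_point:
  assumes q: "q > 0" and z: "z > 1" and b: "\<beta> \<ge> 0" and gm: "global_minimizer \<beta> q z \<nu>"
  shows "\<exists>u\<in>{0..<1}. sym_point q u \<nu>"
proof -
  have \<nu>: "\<nu> \<in> prob_simplex q" using gm by (simp add: global_minimizer_def)
  define m where "m = Max (\<nu> ` {1..q})"
  have "m \<in> \<nu> ` {1..q}" unfolding m_def using q by (intro Max_in) auto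
  then obtain k where "k \<in> {1..q}" "\<nu> k = m" by auto
  moreover have "\<nu> i \<le> m" if "i \<in> {1..q}" for i unfolding m_def using that by (intro Max_ge) auto
  ultimately have k: "k \<in> {1..q}" "\<forall>i\<in>{1..q}. \<nu> i \<le> \<nu> k" by auto
  obtain a where a: "0 < a" "a \<le> \<nu> k" "\<forall>j\<in>{1..q} - {k}. \<nu> j = a"
  proof (cases "\<exists>l\<in>{1..q}. \<nu> l < \<nu> k")
    case True
    then obtain l where l: "l \<in> {1..q}" "\<nu> l < \<nu> k" by blast
    show thesis
    proof (rule that[of "\<nu> l"])
      show "0 < \<nu> l" "\<nu> l \<le> \<nu> k" using l global_minimizer_pos[OF q z b gm l(1)] by simp_all
      show "\<forall>j\<in>{1..q} - {k}. \<nu> j = \<nu> l"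
        by (auto intro: global_minimizer_eq_below_max[OF q z b gm k _ _ l])
    qed
  next
    case False
    then have "\<forall>j\<in>{1..q}. \<nu> j = \<nu> k" using k(2) by (meson not_less order.antisym)
    then show thesis
      using global_minimizer_pos[OF q z b gm k(1)] by (intro that[of "\<nu> k"]) blast+
  qed
  have "sym_point q (1 - real q * a) \<nu>"
    using sym_point_of_two_levels[OF q \<nu> k(1) a(3)] .
  moreover have "real q * a \<le> 1"
  proof -
    have "a \<le> \<nu> i" if "i \<in> {1..q}" for i
      using a that by (cases "i = k") auto
    then have "(\<Sum>i=1..q. a) \<le> (\<Sum>i=1..q. \<nu> i)"
      by (intro sum_mono) auto
    then show ?thesis using \<nu> by (simp add: prob_simplex_def)
  qed
  ultimately show ?thesis using a q by (intro bexI[of _ "1 - real q * a"]) auto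
qed

section \<open>Reduction to the symmetric curve\<close>

definition sym_vec :: "nat \<Rightarrow> real \<Rightarrow> nat \<Rightarrow> real" where
  "sym_vec q u i = (if i = 1 then (1 + (real q - 1) * u) / real q
                    else if i \<in> {2..q} then (1 - u) / real q else 0)"

definition sym_energy :: "real \<Rightarrow> nat \<Rightarrow> real \<Rightarrow> real \<Rightarrow> real" where
  "sym_energy \<beta> q z u = site_energy \<beta> q z ((1 + (real q - 1) * u) / real q)
                        + (real q - 1) * site_energy \<beta> q z ((1 - u) / real q)"

lemma sym_point_sym_vec:
  assumes "q \<ge> 1"
  shows "sym_point q u (sym_vec q u)"
  unfolding sym_point_def using assms
  by (intro conjI allI impI bexI[of _ 1]) (auto simp: sym_vec_def)

lemma sum_sym_point:
  assumes "sym_point q u \<nu>" "q \<ge> 1"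
  shows "(\<Sum>i=1..q. F (\<nu> i)) = F ((1 + (real q - 1) * u) / real q) + (real q - 1) * F ((1 - u) / real q)"
proof -
  obtain k where k: "k \<in> {1..q}" "\<nu> k = (1 + (real q - 1) * u) / real q"
    and others: "\<forall>j\<in>{1..q} - {k}. \<nu> j = (1 - u) / real q"
    using assms unfolding sym_point_def by auto
  have "(\<Sum>i=1..q. F (\<nu> i)) = F (\<nu> k) + (\<Sum>i\<in>{1..q} - {k}. F (\<nu> i))"
    using k by (simp add: sum.remove)
  also have "(\<Sum>i\<in>{1..q} - {k}. F (\<nu> i)) = (\<Sum>i\<in>{1..q} - {k}. F ((1 - u) / real q))"
    using others by (intro sum.cong) auto
  also have "\<dots> = real (q - 1) * F ((1 - u) / real q)" using k by simp
  finally show ?thesis using k assms by (simp add: of_nat_diff)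
qed

lemma Gamma_sym_point:
  assumes "sym_point q u \<nu>" "q \<ge> 1"
  shows "Gamma \<beta> q z \<nu> = sym_energy \<beta> q z u"
  unfolding Gamma_eq_sum_site_energy sym_energy_def using sum_sym_point[OF assms] by simp

lemma sym_point_in_prob_simplex:
  assumes "sym_point q u \<nu>" "q \<ge> 1" "0 \<le> u" "u \<le> 1"
  shows "\<nu> \<in> prob_simplex q"
proof -
  obtain k where k: "k \<in> {1..q}" "\<nu> k = (1 + (real q - 1) * u) / real q"
    and others: "\<forall>j\<in>{1..q} - {k}. \<nu> j = (1 - u) / real q"
    using assms unfolding sym_point_def by auto
  have "0 \<le> (1 + (real q - 1) * u) / real q" "0 \<le> (1 - u) / real q"
    using assms by auto
  then have "\<forall>i\<in>{1..q}. 0 \<le> \<nu> i" using k others by (metis DiffI singletonD)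
  moreover have "(\<Sum>i=1..q. \<nu> i) = 1"
    using sum_sym_point[OF assms(1,2), of "\<lambda>x. x"] assms by (simp add: field_simps)
  ultimately show ?thesis using assms(1) unfolding prob_simplex_def sym_point_def by auto
qed

lemma compact_prob_simplex: "compact (prob_simplex q)"
proof -
  define T where "T = (\<lambda>i::nat. if i \<in> {1..q} then {0..1::real} else {0})"
  have "compactin (product_topology (\<lambda>i. euclidean) UNIV) (Pi\<^sub>E UNIV T)"
    by (subst compactin_PiE) (auto simp: T_def)
  then have "compact (Pi UNIV T)"
    by (simp add: euclidean_product_topology PiE_UNIV_domain)
  moreover have "closed {\<nu>::nat\<Rightarrow>real. (\<Sum>i=1..q. \<nu> i) = 1}"
    by (intro closed_Collect_eq continuous_intros continuous_on_product_coordinates)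
  moreover have "prob_simplex q = Pi UNIV T \<inter> {\<nu>. (\<Sum>i=1..q. \<nu> i) = 1}"
  proof (intro set_eqI iffI)
    fix \<nu> assume "\<nu> \<in> prob_simplex q"
    then show "\<nu> \<in> Pi UNIV T \<inter> {\<nu>. (\<Sum>i=1..q. \<nu> i) = 1}"
      using prob_simplex_le_1[of \<nu> q] unfolding prob_simplex_def T_def by auto
  next
    fix \<nu> assume "\<nu> \<in> Pi UNIV T \<inter> {\<nu>. (\<Sum>i=1..q. \<nu> i) = 1}"
    then show "\<nu> \<in> prob_simplex q"
      unfolding prob_simplex_def T_def Pi_def by (auto split: if_splits)
  qed
  ultimately show ?thesis using compact_Int_closed by simp
qed

lemma global_minimizer_exists:
  assumes "q \<ge> 1" "z > 0"
  shows "\<exists>\<nu>. global_minimizer \<beta> q z \<nu>"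
proof -
  have "continuous_on (prob_simplex q) (\<lambda>\<nu>. site_energy \<beta> q z (\<nu> i))" for i
  proof (rule continuous_on_compose2[OF continuous_on_site_energy])
    show "continuous_on (prob_simplex q) (\<lambda>\<nu>. \<nu> i)"
      by (rule continuous_on_subset[OF continuous_on_product_coordinates]) simp
  qed (use assms in \<open>auto simp: prob_simplex_def\<close>)
  then have "continuous_on (prob_simplex q) (Gamma \<beta> q z)"
    unfolding Gamma_eq_sum_site_energy[abs_def] by (intro continuous_on_sum) auto
  moreover have "sym_vec q 0 \<in> prob_simplex q"
    using sym_point_in_prob_simplex[OF sym_point_sym_vec] assms by auto
  ultimately show ?thesis
    using continuous_attains_inf[OF compact_prob_simplex] unfolding global_minimizer_def by blast
qed

lemma global_minimizer_iff_sym_energy_min: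
  assumes q: "q \<ge> 1" and z: "z > 1" and b: "\<beta> \<ge> 0"
  shows "global_minimizer \<beta> q z \<nu> \<longleftrightarrow>
    (\<exists>u\<in>{0..<1}. sym_point q u \<nu> \<and> (\<forall>v\<in>{0..1}. sym_energy \<beta> q z u \<le> sym_energy \<beta> q z v))"
proof
  assume gm: "global_minimizer \<beta> q z \<nu>"
  then obtain u where u: "u \<in> {0..<1}" "sym_point q u \<nu>"
    using global_minimizer_sym_point[OF _ z b gm] q by auto
  have "sym_energy \<beta> q z u \<le> sym_energy \<beta> q z v" if "v \<in> {0..1}" for v
  proof -
    have "sym_vec q v \<in> prob_simplex q"
      using sym_point_in_prob_simplex[OF sym_point_sym_vec[OF q] q] that by auto
    then have "Gamma \<beta> q z \<nu> \<le> Gamma \<beta> q z (sym_vec q v)"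
      using gm unfolding global_minimizer_def by blast
    then show ?thesis
      using Gamma_sym_point[OF u(2) q] Gamma_sym_point[OF sym_point_sym_vec[OF q] q] by simp
  qed
  then show "\<exists>u\<in>{0..<1}. sym_point q u \<nu> \<and> (\<forall>v\<in>{0..1}. sym_energy \<beta> q z u \<le> sym_energy \<beta> q z v)"
    using u by auto
next
  assume "\<exists>u\<in>{0..<1}. sym_point q u \<nu> \<and> (\<forall>v\<in>{0..1}. sym_energy \<beta> q z u \<le> sym_energy \<beta> q z v)"
  then obtain u where u: "u \<in> {0..<1}" "sym_point q u \<nu>" "\<forall>v\<in>{0..1}. sym_energy \<beta> q z u \<le> sym_energy \<beta> q z v"
    by blast
  obtain \<mu> where gm: "global_minimizer \<beta> q z \<mu>" using global_minimizer_exists q z by force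
  then obtain v where v: "v \<in> {0..<1}" "sym_point q v \<mu>"
    using global_minimizer_sym_point[OF _ z b gm] q by auto
  have "Gamma \<beta> q z \<nu> = sym_energy \<beta> q z u" using Gamma_sym_point[OF u(2) q] .
  also have "\<dots> \<le> sym_energy \<beta> q z v" using u(3) v(1) by auto
  also have "\<dots> = Gamma \<beta> q z \<mu>" using Gamma_sym_point[OF v(2) q] by simp
  finally show "global_minimizer \<beta> q z \<nu>"
    using gm sym_point_in_prob_simplex[OF u(2) q] u(1) unfolding global_minimizer_def by auto
qed

section \<open>Unimodality of the weight function\<close>

definition weight :: "real \<Rightarrow> real \<Rightarrow> real \<Rightarrow> real" where
  "weight m p u = m * (1 + m*u) powr p * (1 - u) + (1 + m*u) * (1 - u) powr p"

definition weight_slope :: "real \<Rightarrow> real \<Rightarrow> real \<Rightarrow> real" where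
  "weight_slope m p r = p * m^2 * r powr (p-1) - m * r powr p + m - p * r"

definition weight_curv :: "real \<Rightarrow> real \<Rightarrow> real \<Rightarrow> real" where
  "weight_curv m p r = (p-1) * m^2 * r powr (p-2) - m * r powr (p-1) - 1"

lemma powr_eq_powr_minus_1_mult: "(r::real) > 0 \<Longrightarrow> r powr a = r powr (a - 1) * r"
  using powr_add[of r "a - 1" 1] by simp

lemma has_real_derivative_weight_slope:
  assumes "r > 0"
  shows "(weight_slope m p has_real_derivative p * weight_curv m p r) (at r)"
proof -
  have "((\<lambda>r. p * m^2 * r powr (p-1) - m * r powr p + m - p * r) has_real_derivative
     p * m^2 * ((p-1) * r powr (p-1-1)) - m * (p * r powr (p - 1)) + 0 - p * 1) (at r)"
    using assms by (intro DERIV_diff DERIV_add DERIV_cmult has_real_derivative_powr DERIV_const DERIV_ident) auto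
  then show ?thesis unfolding weight_slope_def[abs_def] weight_curv_def by (simp add: algebra_simps)
qed

lemma has_real_derivative_weight_curv:
  assumes "r > 0"
  shows "(weight_curv m p has_real_derivative (p-1) * m * r powr (p-3) * ((p-2)*m - r)) (at r)"
proof -
  have "((\<lambda>r. (p-1) * m^2 * r powr (p-2) - m * r powr (p-1) - 1) has_real_derivative
     (p-1) * m^2 * ((p-2) * r powr (p-2-1)) - m * ((p-1) * r powr (p - 1 - 1)) - 0) (at r)"
    using assms by (intro DERIV_diff DERIV_add DERIV_cmult has_real_derivative_powr DERIV_const DERIV_ident) auto
  moreover have "r powr (p - 1 - 1) = r powr (p - 3) * r"
    using powr_eq_powr_minus_1_mult[OF assms, of "p - 2"] by (simp add: algebra_simps)
  ultimately show ?thesis unfolding weight_curv_def[abs_def]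
    by (simp add: algebra_simps power2_eq_square)
qed

lemma weight_curv_sign_change:
  assumes m: "m \<ge> 1" and p: "p \<ge> 1"
  shows "\<exists>r1\<ge>1. (\<forall>r. 1 < r \<and> r < r1 \<longrightarrow> weight_curv m p r > 0) \<and> (\<forall>r>r1. weight_curv m p r < 0)
     \<and> (m = 1 \<and> p > 3 \<longrightarrow> r1 > 1) \<and> (m = 1 \<and> p \<le> 3 \<longrightarrow> r1 = 1)"
proof (cases "p = 1")
  case True
  then have "weight_curv m p r < 0" if "r > 0" for r using that m by (simp add: weight_curv_def)
  then show ?thesis using True by (intro exI[of _ 1]) auto
next
  case False
  then have p1: "p > 1" using p by simp
  define d where "d r = (p-1) * m * r powr (p-3) * ((p-2)*m - r)" for r
  have deriv: "(weight_curv m p has_real_derivative d x) (at x)" if "x \<ge> 1" for x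
    unfolding d_def using that by (intro has_real_derivative_weight_curv) simp
  define c where "c = max 1 ((p-2)*m)"
  have dpos: "d r > 0" if "1 < r" "r < c" for r
    using that p1 m unfolding d_def c_def by (intro mult_pos_pos) auto
  have dneg: "d r < 0" if "r > c" for r
  proof -
    have "(p-1) * m * r powr (p-3) > 0" using that p1 m by (auto simp: c_def)
    then show ?thesis using that unfolding d_def c_def by (simp add: mult_pos_neg)
  qed
  have curv_1: "weight_curv m p 1 = (p-1)*m^2 - m - 1" by (simp add: weight_curv_def)
  show ?thesis
  proof (cases "(m = 1 \<and> p \<le> 3) \<or> weight_curv m p 1 < 0")
    case True
    have "(p-2)*m \<le> 1"
    proof (rule ccontr)
      assume "\<not> (p-2)*m \<le> 1"
      then have "(p-2)*m*m > 1 * m" "\<not> (m = 1 \<and> p \<le> 3)"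
        using m by (auto intro: mult_strict_right_mono)
      moreover have "m*m \<ge> 1*1" using m by (intro mult_mono) auto
      ultimately show False using True curv_1 by (simp add: power2_eq_square algebra_simps)
    qed
    then have c1: "c = 1" by (simp add: c_def)
    have "weight_curv m p r < weight_curv m p 1" if "r > 1" for r
      by (rule DERIV_neg_imp_less[OF that]) (use deriv dneg c1 in auto)
    moreover have "weight_curv m p 1 \<le> 0" using True curv_1 by auto
    ultimately have "weight_curv m p r < 0" if "r > 1" for r
      using that by fastforce
    moreover have "\<not> (m = 1 \<and> p > 3)" using True curv_1 by auto
    ultimately show ?thesis by (intro exI[of _ 1]) auto
  next
    case False
    define R where "R = (p-1)*m + 1"
    have R1: "R > 1" using p1 m by (simp add: R_def)
    have "weight_curv m p R = m * R powr (p-2) * ((p-1)*m - R) - 1"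
      using powr_eq_powr_minus_1_mult[of R "p-1"] R1 by (simp add: weight_curv_def power2_eq_square algebra_simps)
    also have "\<dots> < 0"
    proof -
      have "m * R powr (p-2) > 0" using R1 m by simp
      then show ?thesis by (simp add: R_def)
    qed
    finally have "weight_curv m p R < 0" .
    moreover have "c \<ge> 1" by (simp add: c_def)
    ultimately obtain r0 where r0: "r0 \<ge> c" "\<forall>x. 1 < x \<and> x < r0 \<longrightarrow> weight_curv m p x > 0"
        "\<forall>x>r0. weight_curv m p x < 0"
      using sign_change_of_unimodal[OF deriv _ dpos dneg _ R1] False by force
    have "m = 1 \<and> p > 3 \<longrightarrow> r0 > 1" using r0(1) by (auto simp: c_def)
    then show ?thesis using r0 False by (intro exI[of _ r0]) (auto simp: c_def)
  qed
qed

lemma weight_slope_sign_change: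
  assumes m: "m \<ge> 1" and p: "p \<ge> 1"
  shows "\<exists>r0\<ge>1. (\<forall>r. 1 < r \<and> r < r0 \<longrightarrow> weight_slope m p r > 0) \<and> (\<forall>r>r0. weight_slope m p r < 0)
     \<and> (\<not>(m = 1 \<and> p \<le> 3) \<longrightarrow> r0 > 1) \<and> (m = 1 \<and> p \<le> 3 \<longrightarrow> r0 = 1)"
proof -
  obtain r1 where r1: "r1 \<ge> 1" "\<forall>r. 1 < r \<and> r < r1 \<longrightarrow> weight_curv m p r > 0"
     "\<forall>r>r1. weight_curv m p r < 0" "m = 1 \<and> p > 3 \<longrightarrow> r1 > 1" "m = 1 \<and> p \<le> 3 \<longrightarrow> r1 = 1"
    using weight_curv_sign_change[OF m p] by blast
  have deriv: "(weight_slope m p has_real_derivative p * weight_curv m p x) (at x)" if "x \<ge> 1" for x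
    using that by (intro has_real_derivative_weight_slope) simp
  have dpos: "p * weight_curv m p r > 0" if "1 < r" "r < r1" for r using r1 that p by simp
  have dneg: "p * weight_curv m p r < 0" if "r > r1" for r using r1 that p by (simp add: mult_pos_neg)
  have slope_1: "weight_slope m p 1 = p * (m^2 - 1)" by (simp add: weight_slope_def algebra_simps)
  show ?thesis
  proof (cases "m = 1 \<and> p \<le> 3")
    case True
    have "weight_slope m p r < weight_slope m p 1" if "r > 1" for r
      by (rule DERIV_neg_imp_less[OF that]) (use deriv dneg r1 True in auto)
    then have "weight_slope m p r < 0" if "r > 1" for r
      using that True slope_1 by fastforce
    then show ?thesis using True by (intro exI[of _ 1]) auto
  next
    case False
    define R where "R = p*m + 1"
    have R1: "R > 1" using p m by (simp add: R_def)
    have "m \<le> p * m" using mult_right_mono[of 1 p m] p m by simp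
    then have "m \<le> R" by (simp add: R_def)
    also have "R \<le> p * R" using mult_right_mono[of 1 p R] p R1 by simp
    finally have "p * R \<ge> m" .
    moreover have "weight_slope m p R = m * R powr (p-1) * (p*m - R) + m - p * R"
      using powr_eq_powr_minus_1_mult[of R p] R1 by (simp add: weight_slope_def power2_eq_square algebra_simps)
    moreover have "m * R powr (p-1) * (p*m - R) < 0" using R1 m by (simp add: R_def mult_pos_neg)
    ultimately have "weight_slope m p R < 0" by simp
    moreover have "weight_slope m p 1 \<ge> 0" using slope_1 m p by simp
    ultimately obtain r0 where r0: "r0 \<ge> r1" "weight_slope m p r0 = 0" "\<forall>x. 1 < x \<and> x < r0 \<longrightarrow> weight_slope m p x > 0"
        "\<forall>x>r0. weight_slope m p x < 0"
      using sign_change_of_unimodal[OF deriv r1(1) dpos dneg _ R1] by blast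
    have "r0 > 1"
    proof (cases "m = 1")
      case True
      then show ?thesis using False r1 r0 by auto
    next
      case False
      then have "m^2 > 1" using m by (simp add: one_less_power)
      then have "weight_slope m p 1 > 0" using slope_1 p by simp
      then have "r0 \<noteq> 1" using r0(2) by auto
      then show ?thesis using r0(1) r1(1) by simp
    qed
    then show ?thesis using r0 r1 False by (intro exI[of _ r0]) auto
  qed
qed

lemma has_real_derivative_weight:
  assumes m: "m \<ge> 1" and u: "0 \<le> u" "u < 1"
  shows "(weight m p has_real_derivative (1-u) powr p * weight_slope m p ((1+m*u)/(1-u))) (at u)"
proof -
  define A where "A = 1 - u"
  define B where "B = 1 + m*u"
  define x where "x = B / A"
  have A0: "A > 0" using u by (simp add: A_def)
  have B0: "B > 0" using u m unfolding B_def by (smt (verit) mult_nonneg_nonneg)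
  have dB: "((\<lambda>u. 1 + m*u) has_real_derivative m) (at u)"
    by (auto intro!: derivative_eq_intros)
  have dA: "((\<lambda>u. 1 - u) has_real_derivative -1) (at u)"
    by (auto intro!: derivative_eq_intros)
  have "(weight m p has_real_derivative
      m * ((p * B powr (p - 1) * m) * A + B powr p * (- 1)) + (m * A powr p + B * (p * A powr (p - 1) * (- 1)))) (at u)"
    unfolding weight_def[abs_def]
    using DERIV_add[OF DERIV_cmult[OF DERIV_mult[OF DERIV_fun_powr[OF dB, of p] dA], of m]
                       DERIV_mult[OF dB DERIV_fun_powr[OF dA, of p]]] A0 B0
    by (simp add: A_def B_def algebra_simps)
  moreover have "m * ((p * B powr (p - 1) * m) * A + B powr p * (- 1)) + (m * A powr p + B * (p * A powr (p - 1) * (- 1)))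
     = A powr p * weight_slope m p x"
  proof -
    have Bx: "B = x * A" using A0 by (simp add: x_def)
    have x0: "x > 0" using A0 B0 by (simp add: x_def)
    have "B powr (p-1) = x powr (p-1) * A powr (p-1)" "B powr p = x powr p * A powr p"
      using Bx x0 A0 by (simp_all add: powr_mult)
    moreover have "A powr p = A powr (p-1) * A" using A0 by (rule powr_eq_powr_minus_1_mult)
    ultimately show ?thesis
      unfolding weight_slope_def Bx by (simp add: algebra_simps power2_eq_square)
  qed
  ultimately show ?thesis by (simp add: A_def B_def x_def)
qed

lemma ratio_less_iff:
  fixes m u r :: real
  assumes "m \<ge> 1" "u < 1" "r \<ge> 1"
  shows "(1+m*u)/(1-u) < r \<longleftrightarrow> u < (r-1)/(r+m)"
    and "(1+m*u)/(1-u) > r \<longleftrightarrow> u > (r-1)/(r+m)"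
proof -
  have "1 - u > 0" "r + m > 0" using assms by auto
  then show "(1+m*u)/(1-u) < r \<longleftrightarrow> u < (r-1)/(r+m)"
    and "(1+m*u)/(1-u) > r \<longleftrightarrow> u > (r-1)/(r+m)"
    by (simp_all add: divide_less_eq less_divide_eq algebra_simps)
qed

lemma weight_unimodal:
  assumes m: "m \<ge> 1" and p: "p \<ge> 1"
  shows "\<exists>u\<^sub>0. 0 \<le> u\<^sub>0 \<and> u\<^sub>0 < 1
     \<and> (\<forall>x y. 0 \<le> x \<and> x < y \<and> y \<le> u\<^sub>0 \<longrightarrow> weight m p x < weight m p y)
     \<and> (\<forall>x y. u\<^sub>0 \<le> x \<and> x < y \<and> y < 1 \<longrightarrow> weight m p y < weight m p x)
     \<and> (\<not>(m = 1 \<and> p \<le> 3) \<longrightarrow> u\<^sub>0 > 0) \<and> (m = 1 \<and> p \<le> 3 \<longrightarrow> u\<^sub>0 = 0)"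
proof -
  obtain r0 where r0: "r0 \<ge> 1" "\<forall>r. 1 < r \<and> r < r0 \<longrightarrow> weight_slope m p r > 0"
      "\<forall>r>r0. weight_slope m p r < 0"
      "\<not>(m = 1 \<and> p \<le> 3) \<longrightarrow> r0 > 1" "m = 1 \<and> p \<le> 3 \<longrightarrow> r0 = 1"
    using weight_slope_sign_change[OF m p] by blast
  \<comment> \<open>the turning point of the weight is where the ratio \<open>(1 + m u)/(1 - u)\<close> reaches \<open>r0\<close>\<close>
  define u\<^sub>0 where "u\<^sub>0 = (r0-1)/(r0+m)"
  define d where "d u = (1-u) powr p * weight_slope m p ((1+m*u)/(1-u))" for u
  have u\<^sub>0: "0 \<le> u\<^sub>0" "u\<^sub>0 < 1" using r0 m by (simp_all add: u\<^sub>0_def)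
  have deriv: "(weight m p has_real_derivative d u) (at u)" if "0 \<le> u" "u < 1" for u
    unfolding d_def using has_real_derivative_weight[OF m that] .
  have ratio_gt_1: "(1+m*u)/(1-u) > 1" if "0 < u" "u < 1" for u
  proof -
    have "m * u > 0" using that m by simp
    then show ?thesis using that by simp
  qed
  have "weight m p x < weight m p y" if "0 \<le> x" "x < y" "y \<le> u\<^sub>0" for x y
  proof (rule DERIV_pos_imp_less[OF that(2)])
    fix t assume t: "x < t" "t < y"
    then have "(1+m*t)/(1-t) < r0" "(1+m*t)/(1-t) > 1"
      using ratio_less_iff(1)[OF m _ r0(1), of t] ratio_gt_1[of t] that u\<^sub>0 by (auto simp: u\<^sub>0_def)
    then show "d t > 0" using r0(2) t that u\<^sub>0 by (simp add: d_def)
  qed (use deriv that u\<^sub>0 in auto)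
  moreover have "weight m p y < weight m p x" if "u\<^sub>0 \<le> x" "x < y" "y < 1" for x y
  proof (rule DERIV_neg_imp_less[OF that(2)])
    fix t assume t: "x < t" "t < y"
    then have "(1+m*t)/(1-t) > r0"
      using ratio_less_iff(2)[OF m _ r0(1), of t] that by (simp add: u\<^sub>0_def)
    then show "d t < 0" using r0(3) t that by (simp add: d_def mult_pos_neg)
  qed (use deriv that u\<^sub>0 in auto)
  moreover have "\<not>(m = 1 \<and> p \<le> 3) \<longrightarrow> u\<^sub>0 > 0" "m = 1 \<and> p \<le> 3 \<longrightarrow> u\<^sub>0 = 0"
    using r0 m by (simp_all add: u\<^sub>0_def)
  ultimately show ?thesis using u\<^sub>0 by blast
qed

lemma weight_quasiconcave:
  assumes "m \<ge> 1" "p \<ge> 1" "0 \<le> x" "x < y" "y < w" "w < 1"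
  shows "weight m p y > min (weight m p x) (weight m p w)"
proof -
  obtain u\<^sub>0 where u\<^sub>0: "\<forall>x y. 0 \<le> x \<and> x < y \<and> y \<le> u\<^sub>0 \<longrightarrow> weight m p x < weight m p y"
     "\<forall>x y. u\<^sub>0 \<le> x \<and> x < y \<and> y < 1 \<longrightarrow> weight m p y < weight m p x"
    using weight_unimodal[OF assms(1,2)] by blast
  show ?thesis
    using u\<^sub>0 assms by (cases "y \<le> u\<^sub>0") (auto simp: min_less_iff_disj)
qed

section \<open>The mean-field residual\<close>

definition mf_residual :: "real \<Rightarrow> nat \<Rightarrow> real \<Rightarrow> real \<Rightarrow> real" where
  "mf_residual \<beta> q z u = ln (1 + (real q - 1) * u) - ln (1 - u) + Delta \<beta> q z u"

definition kappa :: "real \<Rightarrow> nat \<Rightarrow> real \<Rightarrow> real" where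
  "kappa \<beta> q z = \<beta> * (z - 1) / real q powr (z - 1)"

definition mf_residual_deriv :: "real \<Rightarrow> nat \<Rightarrow> real \<Rightarrow> real \<Rightarrow> real" where
  "mf_residual_deriv \<beta> q z u =
     (real q - kappa \<beta> q z * weight (real q - 1) (z - 1) u) / ((1 - u) * (1 + (real q - 1) * u))"

lemma mf_residual_0 [simp]: "mf_residual \<beta> q z 0 = 0"
  by (simp add: mf_residual_def Delta_def)

lemma mf_residual_shift_beta:
  "mf_residual \<beta> q z u = mf_residual \<beta>' q z u - (\<beta> - \<beta>') *
    (((1 + (real q - 1) * u) powr (z - 1) - (1 - u) powr (z - 1)) / real q powr (z - 1))"
  unfolding mf_residual_def Delta_def by (simp add: algebra_simps diff_divide_distrib)

lemma has_real_derivative_sym_energy: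
  assumes q: "q \<ge> 1" and z: "z \<noteq> 0" and u: "0 \<le> u" "u < 1"
  shows "(sym_energy \<beta> q z has_real_derivative ((real q - 1) / real q) * mf_residual \<beta> q z u) (at u)"
proof -
  define Q where "Q = real q"
  define m where "m = real q - 1"
  define B where "B = 1 + m * u"
  define A where "A = 1 - u"
  have Q0: "Q > 0" using q by (simp add: Q_def)
  have B0: "B > 0" using q u by (simp add: B_def m_def add_pos_nonneg)
  have A0: "A > 0" using u by (simp add: A_def)
  have "q > 0" using q by simp
  note site = has_real_derivative_site_energy[OF _ \<open>q > 0\<close> z]
  have dB: "((\<lambda>u. (1 + m * u) / Q) has_real_derivative m / Q) (at u)"
    using Q0 by (auto intro!: derivative_eq_intros)
  have dA: "((\<lambda>u. (1 - u) / Q) has_real_derivative -1 / Q) (at u)"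
    using Q0 by (auto intro!: derivative_eq_intros)
  have d1: "((\<lambda>u. site_energy \<beta> q z ((1 + m * u) / Q)) has_real_derivative
      (site_slope \<beta> z (B / Q) + ln (real q) + 1) * (m / Q)) (at u)"
    using DERIV_chain2[OF site dB, of \<beta>] B0 Q0 by (simp add: B_def)
  have d2: "((\<lambda>u. site_energy \<beta> q z ((1 - u) / Q)) has_real_derivative
      (site_slope \<beta> z (A / Q) + ln (real q) + 1) * (-1 / Q)) (at u)"
    using DERIV_chain2[OF site dA, of \<beta>] A0 Q0 by (simp add: A_def)
  have "(sym_energy \<beta> q z has_real_derivative (m / Q) * (site_slope \<beta> z (B / Q) - site_slope \<beta> z (A / Q))) (at u)"
    unfolding sym_energy_def[abs_def] using DERIV_add[OF d1 DERIV_cmult[OF d2, of m]]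
    by (simp add: m_def Q_def algebra_simps)
  moreover have "site_slope \<beta> z (B / Q) - site_slope \<beta> z (A / Q) = mf_residual \<beta> q z u"
  proof -
    have "(B / Q) powr (z - 1) = B powr (z - 1) / Q powr (z - 1)"
      "(A / Q) powr (z - 1) = A powr (z - 1) / Q powr (z - 1)"
      "ln (B / Q) = ln B - ln Q" "ln (A / Q) = ln A - ln Q"
      using A0 B0 Q0 by (simp_all add: powr_divide ln_div)
    then show ?thesis
      unfolding site_slope_def mf_residual_def Delta_def
      by (simp add: A_def B_def m_def Q_def algebra_simps diff_divide_distrib)
  qed
  ultimately show ?thesis by (simp add: m_def Q_def)
qed

lemma has_real_derivative_mf_residual:
  assumes q: "q \<ge> 1" and u: "0 \<le> u" "u < 1"
  shows "(mf_residual \<beta> q z has_real_derivative mf_residual_deriv \<beta> q z u) (at u)"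
proof -
  define Q where "Q = real q"
  define m where "m = real q - 1"
  define p where "p = z - 1"
  define B where "B = 1 + m * u"
  define A where "A = 1 - u"
  have Q0: "Q > 0" using q by (simp add: Q_def)
  have B0: "B > 0" using q u by (simp add: B_def m_def add_pos_nonneg)
  have A0: "A > 0" using u by (simp add: A_def)
  have dB: "((\<lambda>u. 1 + m * u) has_real_derivative m) (at u)"
    by (auto intro!: derivative_eq_intros)
  have dA: "((\<lambda>u. 1 - u) has_real_derivative -1) (at u)"
    by (auto intro!: derivative_eq_intros)
  have l1: "((\<lambda>u. ln (1 + m * u)) has_real_derivative 1 / B * m) (at u)"
    using DERIV_chain2[OF DERIV_ln_divide dB] B0 by (simp add: B_def)
  have l2: "((\<lambda>u. ln (1 - u)) has_real_derivative 1 / A * (-1)) (at u)"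
    using DERIV_chain2[OF DERIV_ln_divide dA] A0 by (simp add: A_def)
  have p1: "((\<lambda>u. (1 + m * u) powr p) has_real_derivative p * B powr (p - 1) * m) (at u)"
    using DERIV_fun_powr[OF dB, of p] B0 by (simp add: B_def)
  have p2: "((\<lambda>u. (1 - u) powr p) has_real_derivative p * A powr (p - 1) * (-1)) (at u)"
    using DERIV_fun_powr[OF dA, of p] A0 by (simp add: A_def)
  define X where "X = B powr (p-1)"
  define Y where "Y = A powr (p-1)"
  define K where "K = \<beta> / Q powr p"
  have D: "(mf_residual \<beta> q z has_real_derivative
      1 / B * m - 1 / A * (-1) + (- K) * (p * X * m - p * Y * (-1))) (at u)"
    unfolding mf_residual_def[abs_def] Delta_def
    using DERIV_add[OF DERIV_diff[OF l1 l2] DERIV_cmult[OF DERIV_diff[OF p1 p2], of "- K"]]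
    by (simp add: m_def Q_def p_def X_def Y_def K_def)
  have XY: "X * B = B powr p" "Y * A = A powr p"
    using A0 B0 by (simp_all add: X_def Y_def powr_eq_powr_minus_1_mult[symmetric])
  have "1 / B * m - 1 / A * (-1) + (- K) * (p * X * m - p * Y * (-1))
      = (Q - K * p * (m * (X * B) * A + B * (Y * A))) / (A * B)"
  proof -
    have "Q = m * A + B" by (simp add: Q_def m_def A_def B_def algebra_simps)
    then show ?thesis using A0 B0 by (simp add: field_simps)
  qed
  also have "\<dots> = (Q - K * p * (m * B powr p * A + B * A powr p)) / (A * B)"
    by (simp only: XY)
  also have "\<dots> = mf_residual_deriv \<beta> q z u"
    unfolding mf_residual_deriv_def kappa_def weight_def
    by (simp add: K_def Q_def m_def p_def A_def B_def algebra_simps)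
  finally show ?thesis using D by simp
qed

lemma mean_field_eq_iff_mf_residual:
  assumes q: "q \<ge> 1" and u: "0 \<le> u" "u < 1"
  shows "mean_field_eq \<beta> q z u \<longleftrightarrow> mf_residual \<beta> q z u = 0"
proof -
  define e where "e = exp (Delta \<beta> q z u)"
  define B where "B = 1 + (real q - 1) * u"
  define A where "A = 1 - u"
  have B0: "B > 0" using q u by (simp add: B_def add_pos_nonneg)
  have A0: "A > 0" using u by (simp add: A_def)
  have "1 + (real q - 1) * e > 0" using q by (simp add: e_def add_pos_nonneg)
  then have "mean_field_eq \<beta> q z u \<longleftrightarrow> e * B = A"
    unfolding mean_field_eq_def e_def[symmetric] A_def B_def by (simp add: eq_divide_eq algebra_simps)
  also have "\<dots> \<longleftrightarrow> e = A / B"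
    using B0 by (simp add: eq_divide_eq)
  also have "\<dots> \<longleftrightarrow> Delta \<beta> q z u = ln (A / B)"
    using A0 B0 unfolding e_def by (metis divide_pos_pos exp_ln ln_exp)
  also have "\<dots> \<longleftrightarrow> mf_residual \<beta> q z u = 0"
    using A0 B0 unfolding mf_residual_def A_def B_def by (auto simp: ln_div)
  finally show ?thesis .
qed

lemma not_mean_field_eq_1:
  assumes q: "q \<ge> 1" and z: "z > 1"
  shows "\<not> mean_field_eq \<beta> q z 1"
proof
  assume "mean_field_eq \<beta> q z 1"
  moreover have "Delta \<beta> q z 1 = - \<beta>"
    using q z by (simp add: Delta_def)
  moreover have "1 + (real q - 1) * exp (-\<beta>) > 0" using q by (simp add: add_pos_nonneg)
  ultimately have "1 + (real q - 1) * exp (-\<beta>) = 1 - exp (-\<beta>)"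
    unfolding mean_field_eq_def by (simp add: eq_divide_eq)
  then have "real q * exp (-\<beta>) = 0" by (simp add: algebra_simps)
  then show False using q by simp
qed

lemma continuous_on_sym_energy:
  assumes q: "q \<ge> 1" and z: "z > 0"
  shows "continuous_on {0..1} (sym_energy \<beta> q z)"
proof -
  have "(\<lambda>u. (1 + (real q - 1) * u) / real q) ` {0..1} \<subseteq> {0..}" "(\<lambda>u. (1 - u) / real q) ` {0..1} \<subseteq> {0..}"
    using q by auto
  then show ?thesis
    unfolding sym_energy_def[abs_def] using q z
    by (intro continuous_on_add continuous_on_mult_left
        continuous_on_compose2[OF continuous_on_site_energy] continuous_intros) auto
qed

lemma mf_residual_deriv_sign:
  assumes q: "q \<ge> 1" and u: "0 \<le> u" "u < 1"
  shows "mf_residual_deriv \<beta> q z u < 0 \<longleftrightarrow> kappa \<beta> q z * weight (real q - 1) (z - 1) u > real q"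
    and "mf_residual_deriv \<beta> q z u > 0 \<longleftrightarrow> kappa \<beta> q z * weight (real q - 1) (z - 1) u < real q"
proof -
  have "(1 - u) * (1 + (real q - 1) * u) > 0" using q u by (simp add: add_pos_nonneg)
  then show "mf_residual_deriv \<beta> q z u < 0 \<longleftrightarrow> kappa \<beta> q z * weight (real q - 1) (z - 1) u > real q"
    and "mf_residual_deriv \<beta> q z u > 0 \<longleftrightarrow> kappa \<beta> q z * weight (real q - 1) (z - 1) u < real q"
    unfolding mf_residual_deriv_def by (simp_all add: divide_less_0_iff zero_less_divide_iff)
qed

lemma sym_energy_strict_mono_on:
  assumes q: "q \<ge> 2" and z: "z > 0" and ab: "0 \<le> a" "a < b" "b \<le> 1"
    and pos: "\<And>t. a < t \<Longrightarrow> t < b \<Longrightarrow> mf_residual \<beta> q z t > 0"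
  shows "sym_energy \<beta> q z a < sym_energy \<beta> q z b"
proof (rule DERIV_pos_imp_increasing_open[OF ab(2)])
  fix t assume t: "a < t" "t < b"
  have "(real q - 1) / real q * mf_residual \<beta> q z t > 0" using q pos[OF t] by simp
  then show "\<exists>d. (sym_energy \<beta> q z has_real_derivative d) (at t) \<and> 0 < d"
    using has_real_derivative_sym_energy[of q z t \<beta>] q z t ab by auto
next
  show "continuous_on {a..b} (sym_energy \<beta> q z)"
    using continuous_on_sym_energy[of q z \<beta>] q z ab by (auto elim: continuous_on_subset)
qed

lemma sym_energy_strict_antimono_on:
  assumes q: "q \<ge> 2" and z: "z > 0" and ab: "0 \<le> a" "a < b" "b \<le> 1"
    and neg: "\<And>t. a < t \<Longrightarrow> t < b \<Longrightarrow> mf_residual \<beta> q z t < 0"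
  shows "sym_energy \<beta> q z b < sym_energy \<beta> q z a"
proof (rule DERIV_neg_imp_decreasing_open[OF ab(2)])
  fix t assume t: "a < t" "t < b"
  have "(real q - 1) / real q > 0" using q by simp
  then have "(real q - 1) / real q * mf_residual \<beta> q z t < 0" using mult_pos_neg neg[OF t] by blast
  then show "\<exists>d. (sym_energy \<beta> q z has_real_derivative d) (at t) \<and> d < 0"
    using has_real_derivative_sym_energy[of q z t \<beta>] q z t ab by auto
next
  show "continuous_on {a..b} (sym_energy \<beta> q z)"
    using continuous_on_sym_energy[of q z \<beta>] q z ab by (auto elim: continuous_on_subset)
qed

section \<open>The critical inverse temperature\<close>

definition entropy_cost :: "nat \<Rightarrow> real \<Rightarrow> real \<Rightarrow> real" where
  "entropy_cost q z u = sym_energy 0 q z u - sym_energy 0 q z 0"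

definition interaction_gain :: "nat \<Rightarrow> real \<Rightarrow> real \<Rightarrow> real" where
  "interaction_gain q z u = (sym_energy 0 q z u - sym_energy 1 q z u) - (sym_energy 0 q z 0 - sym_energy 1 q z 0)"

definition beta_crit :: "nat \<Rightarrow> real \<Rightarrow> real" where
  "beta_crit q z = Inf ((\<lambda>u. entropy_cost q z u / interaction_gain q z u) ` {0<..1})"

lemma sym_energy_gap:
  "sym_energy \<beta> q z u - sym_energy \<beta> q z 0 = entropy_cost q z u - \<beta> * interaction_gain q z u"
  unfolding entropy_cost_def interaction_gain_def sym_energy_def site_energy_def by (simp add: algebra_simps)

context
  fixes q :: nat and z :: real
  assumes q: "q \<ge> 2" and z: "z \<ge> 2"
begin

lemma interaction_gain_pos:
  assumes u: "0 < u" "u \<le> 1"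
  shows "interaction_gain q z u > 0"
proof -
  define f where "f = (\<lambda>u. sym_energy 1 q z u - sym_energy 0 q z u)"
  have "f u < f 0"
  proof (rule DERIV_neg_imp_decreasing_open[OF u(1)])
    fix t assume t: "0 < t" "t < u"
    have "(real q - 1) * t > 0" using q t by simp
    then have "(1 - t) powr (z - 1) < (1 + (real q - 1) * t) powr (z - 1)"
      using z t u by (intro powr_less_mono2) auto
    then have "Delta 1 q z t < 0"
      unfolding Delta_def using q by simp
    moreover have "(real q - 1) / real q > 0" using q by simp
    ultimately have "(real q - 1) / real q * Delta 1 q z t < 0" using mult_pos_neg by blast
    moreover have "(f has_real_derivative
        (real q - 1) / real q * mf_residual 1 q z t - (real q - 1) / real q * mf_residual 0 q z t) (at t)"
      unfolding f_def using q z t u by (intro DERIV_diff has_real_derivative_sym_energy) auto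
    ultimately show "\<exists>d. (f has_real_derivative d) (at t) \<and> d < 0"
      unfolding mf_residual_def by (auto simp: Delta_def algebra_simps)
  next
    show "continuous_on {0..u} f"
      unfolding f_def using q z u
      by (intro continuous_on_diff continuous_on_subset[OF continuous_on_sym_energy]) auto
  qed
  then show ?thesis unfolding interaction_gain_def f_def by simp
qed

lemma sym_energy_le_0_iff:
  assumes u: "0 < u" "u \<le> 1"
  shows "sym_energy \<beta> q z u \<le> sym_energy \<beta> q z 0 \<longleftrightarrow> entropy_cost q z u / interaction_gain q z u \<le> \<beta>"
    and "sym_energy \<beta> q z u < sym_energy \<beta> q z 0 \<longleftrightarrow> entropy_cost q z u / interaction_gain q z u < \<beta>"
proof -
  have "interaction_gain q z u > 0" using interaction_gain_pos[OF u] .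
  moreover have "sym_energy \<beta> q z u - sym_energy \<beta> q z 0 = entropy_cost q z u - \<beta> * interaction_gain q z u"
    by (rule sym_energy_gap)
  ultimately show "sym_energy \<beta> q z u \<le> sym_energy \<beta> q z 0 \<longleftrightarrow> entropy_cost q z u / interaction_gain q z u \<le> \<beta>"
    and "sym_energy \<beta> q z u < sym_energy \<beta> q z 0 \<longleftrightarrow> entropy_cost q z u / interaction_gain q z u < \<beta>"
    by (simp_all add: divide_le_eq divide_less_eq) linarith+
qed

lemma weight_le:
  assumes u: "0 \<le> u" "u < 1"
  shows "weight (real q - 1) (z - 1) u \<le> real q powr (z - 1) * real q"
proof -
  have "(real q - 1) * u \<le> real q - 1" using u q mult_left_le[of u "real q - 1"] by simp
  then have B: "1 + (real q - 1) * u \<le> real q" by simp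
  then have "(1 + (real q - 1) * u) powr (z - 1) \<le> real q powr (z - 1)"
    using B u q z by (intro powr_mono2) auto
  moreover have "(1 - u) powr (z - 1) \<le> 1" using u z by (intro powr_le1) auto
  moreover have "real q \<le> real q powr (z - 1)" using q z powr_mono[of 1 "z - 1" "real q"] by simp
  ultimately have "weight (real q - 1) (z - 1) u \<le> (real q - 1) * real q powr (z - 1) * 1 + real q * 1"
    unfolding weight_def using B u q by (intro add_mono mult_mono) auto
  also have "\<dots> \<le> real q powr (z - 1) * real q"
    using \<open>real q \<le> real q powr (z - 1)\<close> by (simp add: algebra_simps)
  finally show ?thesis .
qed

lemma sym_energy_min_at_0_small_beta:
  assumes b: "0 \<le> \<beta>" "\<beta> * (z - 1) < 1" and u: "0 < u" "u \<le> 1"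
  shows "sym_energy \<beta> q z 0 < sym_energy \<beta> q z u"
proof (rule sym_energy_strict_mono_on[OF q _ order_refl u])
  fix t assume t: "0 < t" "t < u"
  have "mf_residual \<beta> q z 0 < mf_residual \<beta> q z t"
  proof (rule DERIV_pos_imp_less[OF t(1)])
    fix s assume s: "0 < s" "s < t"
    have "kappa \<beta> q z \<ge> 0" using b z by (simp add: kappa_def)
    then have "kappa \<beta> q z * weight (real q - 1) (z - 1) s \<le> kappa \<beta> q z * (real q powr (z - 1) * real q)"
      using weight_le[of s] s t u by (intro mult_left_mono) auto
    also have "\<dots> = \<beta> * (z - 1) * real q" using q by (simp add: kappa_def)
    also have "\<dots> < real q" using b q by simp
    finally show "mf_residual_deriv \<beta> q z s > 0"
      using mf_residual_deriv_sign(2)[of q s] q s t u by simp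
  qed (use has_real_derivative_mf_residual q t u in auto)
  then show "mf_residual \<beta> q z t > 0" by simp
qed (use z in auto)

lemma entropy_cost_ratio_ge:
  assumes u: "0 < u" "u \<le> 1"
  shows "entropy_cost q z u / interaction_gain q z u \<ge> 1 / (z - 1)"
proof (rule ccontr)
  define r where "r = entropy_cost q z u / interaction_gain q z u"
  define \<beta> where "\<beta> = max 0 r"
  assume "\<not> entropy_cost q z u / interaction_gain q z u \<ge> 1 / (z - 1)"
  then have "r < 1 / (z - 1)" by (simp add: r_def)
  then have "r * (z - 1) < 1" using z by (simp add: less_divide_eq)
  then have "\<beta> * (z - 1) < 1" using z by (simp add: \<beta>_def max_def)
  then have "sym_energy \<beta> q z 0 < sym_energy \<beta> q z u"
    using sym_energy_min_at_0_small_beta u by (simp add: \<beta>_def)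
  moreover have "sym_energy \<beta> q z u \<le> sym_energy \<beta> q z 0"
    using sym_energy_le_0_iff(1)[OF u] by (simp add: \<beta>_def r_def)
  ultimately show False by simp
qed

lemma bdd_below_entropy_cost_ratio:
  "bdd_below ((\<lambda>u. entropy_cost q z u / interaction_gain q z u) ` {0<..1})"
  using entropy_cost_ratio_ge by (auto intro!: bdd_belowI2)

lemma beta_crit_pos: "beta_crit q z > 0"
proof -
  have "beta_crit q z \<ge> 1 / (z - 1)"
    unfolding beta_crit_def using entropy_cost_ratio_ge by (intro cInf_greatest) auto
  moreover have "1 / (z - 1) > 0" using z by simp
  ultimately show ?thesis by linarith
qed

lemma beta_crit_le_entropy_cost_ratio:
  "0 < u \<Longrightarrow> u \<le> 1 \<Longrightarrow> beta_crit q z \<le> entropy_cost q z u / interaction_gain q z u"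
  unfolding beta_crit_def using bdd_below_entropy_cost_ratio by (intro cInf_lower) auto

lemma sym_energy_0_less_below_beta_crit:
  assumes "\<beta> < beta_crit q z" "0 < u" "u \<le> 1"
  shows "sym_energy \<beta> q z 0 < sym_energy \<beta> q z u"
  using beta_crit_le_entropy_cost_ratio[of u] sym_energy_le_0_iff(1)[of u \<beta>] assms by auto

lemma sym_energy_min_iff_below_beta_crit:
  assumes b: "\<beta> < beta_crit q z" and u: "u \<in> {0..<1}"
  shows "(\<forall>v\<in>{0..1}. sym_energy \<beta> q z u \<le> sym_energy \<beta> q z v) \<longleftrightarrow> u = 0"
proof
  assume min: "\<forall>v\<in>{0..1}. sym_energy \<beta> q z u \<le> sym_energy \<beta> q z v"
  show "u = 0"
  proof (rule ccontr)
    assume "u \<noteq> 0"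
    then have "sym_energy \<beta> q z 0 < sym_energy \<beta> q z u"
      using sym_energy_0_less_below_beta_crit[OF b] u by simp
    moreover have "sym_energy \<beta> q z u \<le> sym_energy \<beta> q z 0" using min by simp
    ultimately show False by simp
  qed
next
  assume "u = 0"
  show "\<forall>v\<in>{0..1}. sym_energy \<beta> q z u \<le> sym_energy \<beta> q z v"
  proof
    fix v :: real assume "v \<in> {0..1}"
    then show "sym_energy \<beta> q z u \<le> sym_energy \<beta> q z v"
      using sym_energy_0_less_below_beta_crit[OF b, of v] \<open>u = 0\<close> by (cases "v = 0") auto
  qed
qed

lemma sym_energy_0_le_at_beta_crit:
  assumes "0 < u" "u \<le> 1"
  shows "sym_energy (beta_crit q z) q z 0 \<le> sym_energy (beta_crit q z) q z u"
  using beta_crit_le_entropy_cost_ratio[of u] sym_energy_le_0_iff(2)[of u "beta_crit q z"] assms by auto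

lemma sym_energy_less_0_above_beta_crit:
  assumes "\<beta> > beta_crit q z"
  shows "\<exists>u. 0 < u \<and> u \<le> 1 \<and> sym_energy \<beta> q z u < sym_energy \<beta> q z 0"
proof -
  obtain x where "x \<in> (\<lambda>u. entropy_cost q z u / interaction_gain q z u) ` {0<..1}" "x < \<beta>"
    using assms cInf_less_iff[OF _ bdd_below_entropy_cost_ratio] by (auto simp: beta_crit_def)
  then show ?thesis using sym_energy_le_0_iff(2) by auto
qed

section \<open>Nontrivial minimizers solve the mean-field equation\<close>

lemma mf_residual_zero_at_interior_min:
  assumes u: "0 < u" "u < 1" and min: "\<forall>v\<in>{0..1}. sym_energy \<beta> q z u \<le> sym_energy \<beta> q z v"
  shows "mf_residual \<beta> q z u = 0"
proof -
  have "(real q - 1) / real q * mf_residual \<beta> q z u = 0"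
  proof (rule DERIV_local_min[OF has_real_derivative_sym_energy])
    show "\<forall>y. \<bar>u - y\<bar> < min u (1 - u) \<longrightarrow> sym_energy \<beta> q z u \<le> sym_energy \<beta> q z y"
      using min by (auto simp: abs_if split: if_splits)
  qed (use q z u in auto)
  then show ?thesis using q by simp
qed

text \<open>By the mean value theorem, a minimizer \<open>u\<close> beating \<open>0\<close> forces the residual, which
  vanishes at both ends of \<open>[0, u]\<close>, to first decrease and then increase.\<close>
lemma mf_residual_deriv_sign_change_below_min:
  assumes u: "0 < u" "u < 1" and zero: "mf_residual \<beta> q z u = 0"
    and lt: "sym_energy \<beta> q z u < sym_energy \<beta> q z 0"
  shows "\<exists>x1 x2. 0 < x1 \<and> x1 < x2 \<and> x2 < u \<and>
           mf_residual_deriv \<beta> q z x1 < 0 \<and> mf_residual_deriv \<beta> q z x2 > 0"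
proof -
  define c where "c = (real q - 1) / real q"
  have c: "c > 0" using q by (simp add: c_def)
  have dG: "(sym_energy \<beta> q z has_real_derivative c * mf_residual \<beta> q z t) (at t)"
    if "0 \<le> t" "t < 1" for t
    using has_real_derivative_sym_energy[of q z t \<beta>] q z that by (simp add: c_def)
  have dg: "(mf_residual \<beta> q z has_real_derivative mf_residual_deriv \<beta> q z t) (at t)"
    if "0 \<le> t" "t < 1" for t
    using has_real_derivative_mf_residual[of q t \<beta> z] q that by simp
  obtain s where s: "0 < s" "s < u"
    "sym_energy \<beta> q z u - sym_energy \<beta> q z 0 = (u - 0) * (c * mf_residual \<beta> q z s)"
    using MVT2[OF u(1) dG] u by auto
  have "u * (c * mf_residual \<beta> q z s) < 0" using s(3) lt by simp
  then have gs: "mf_residual \<beta> q z s < 0" using u c by (simp add: mult_less_0_iff)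
  obtain x1 where x1: "0 < x1" "x1 < s" "mf_residual \<beta> q z s - mf_residual \<beta> q z 0 = (s - 0) * mf_residual_deriv \<beta> q z x1"
    using MVT2[OF s(1) dg] s u by auto
  obtain x2 where x2: "s < x2" "x2 < u" "mf_residual \<beta> q z u - mf_residual \<beta> q z s = (u - s) * mf_residual_deriv \<beta> q z x2"
    using MVT2[OF s(2) dg] s u by auto
  have "mf_residual_deriv \<beta> q z x1 < 0" using x1 gs s by (simp add: mult_less_0_iff)
  moreover have "mf_residual_deriv \<beta> q z x2 > 0"
  proof -
    have "(u - s) * mf_residual_deriv \<beta> q z x2 > 0" using x2(3) gs zero by simp
    then show ?thesis using s by (simp add: zero_less_mult_iff)
  qed
  ultimately show ?thesis using x1 x2 s by (intro exI[of _ x1] exI[of _ x2]) auto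
qed

text \<open>Quasiconcavity of the weight: once the residual has turned from decreasing to
  increasing, it keeps increasing.\<close>
lemma mf_residual_deriv_sign_pattern:
  assumes b: "\<beta> > 0" and x: "0 < x1" "x1 < x2" "x2 < x3" "x3 < 1"
    and d: "mf_residual_deriv \<beta> q z x1 < 0" "mf_residual_deriv \<beta> q z x2 > 0"
  shows "mf_residual_deriv \<beta> q z x3 > 0"
proof (rule ccontr)
  define W where "W = weight (real q - 1) (z - 1)"
  define k where "k = kappa \<beta> q z"
  have k: "k > 0" using b z q by (simp add: k_def kappa_def)
  assume "\<not> mf_residual_deriv \<beta> q z x3 > 0"
  then have "k * W x1 > real q" "k * W x2 < real q" "k * W x3 \<ge> real q"
    using d mf_residual_deriv_sign[of q _ \<beta> z] q x by (auto simp: W_def k_def)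
  then have "k * min (W x1) (W x3) \<ge> real q" by (simp add: min_def)
  moreover have "W x2 > min (W x1) (W x3)"
    unfolding W_def using x q z by (intro weight_quasiconcave) auto
  then have "k * W x2 > k * min (W x1) (W x3)" using k by simp
  ultimately show False using \<open>k * W x2 < real q\<close> by simp
qed

lemma mf_residual_pos_beyond_min:
  assumes b: "\<beta> > 0" and u: "0 < u" "u < 1" and zero: "mf_residual \<beta> q z u = 0"
    and lt: "sym_energy \<beta> q z u < sym_energy \<beta> q z 0"
    and v: "u < v" "v < 1"
  shows "mf_residual \<beta> q z v > 0"
proof (rule ccontr)
  assume "\<not> mf_residual \<beta> q z v > 0"
  obtain x3 where x3: "u < x3" "x3 < v" "mf_residual \<beta> q z v - mf_residual \<beta> q z u = (v - u) * mf_residual_deriv \<beta> q z x3"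
    using MVT2[OF v(1), of "mf_residual \<beta> q z" "mf_residual_deriv \<beta> q z"]
      has_real_derivative_mf_residual q u v by auto
  then have "\<not> mf_residual_deriv \<beta> q z x3 > 0"
    using \<open>\<not> mf_residual \<beta> q z v > 0\<close> zero by (auto simp: zero_less_mult_iff)
  moreover obtain x1 x2 where x: "0 < x1" "x1 < x2" "x2 < u"
      and d: "mf_residual_deriv \<beta> q z x1 < 0" "mf_residual_deriv \<beta> q z x2 > 0"
    using mf_residual_deriv_sign_change_below_min[OF u zero lt] by blast
  moreover have "x2 < x3" "x3 < 1" using x(3) x3 v by simp_all
  ultimately show False
    using mf_residual_deriv_sign_pattern[OF b x(1,2) _ _ d] by simp
qed

lemma u_mf_eq_last_zero:
  assumes u: "0 < u" "u < 1" and zero: "mf_residual \<beta> q z u = 0"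
    and pos: "\<And>v. u < v \<Longrightarrow> v < 1 \<Longrightarrow> mf_residual \<beta> q z v > 0"
  shows "u_mf \<beta> q z = u"
  unfolding u_mf_def
proof (rule cSup_eq_maximum)
  show "u \<in> {u \<in> {0..1}. mean_field_eq \<beta> q z u}"
    using u zero mean_field_eq_iff_mf_residual[of q u \<beta> z] q by auto
next
  fix x assume x: "x \<in> {u \<in> {0..1}. mean_field_eq \<beta> q z u}"
  then have "x \<noteq> 1" using not_mean_field_eq_1[of q z \<beta>] q z by auto
  then have "mf_residual \<beta> q z x = 0"
    using x mean_field_eq_iff_mf_residual[of q x \<beta> z] q by auto
  show "x \<le> u"
  proof (rule ccontr)
    assume "\<not> x \<le> u"
    then have "mf_residual \<beta> q z x > 0" using pos x \<open>x \<noteq> 1\<close> by simp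
    then show False using \<open>mf_residual \<beta> q z x = 0\<close> by simp
  qed
qed

section \<open>Global minimizers below and above the critical temperature\<close>

lemma global_minimizer_iff_below_beta_crit:
  assumes b: "0 \<le> \<beta>" "\<beta> < beta_crit q z"
  shows "global_minimizer \<beta> q z \<nu> \<longleftrightarrow> sym_point q 0 \<nu>"
proof -
  note min_iff = sym_energy_min_iff_below_beta_crit[OF b(2)]
  note reduction = global_minimizer_iff_sym_energy_min[of q z \<beta> \<nu>]
  show ?thesis
  proof
    assume "global_minimizer \<beta> q z \<nu>"
    then obtain u where "u \<in> {0..<1}" "sym_point q u \<nu>" "\<forall>v\<in>{0..1}. sym_energy \<beta> q z u \<le> sym_energy \<beta> q z v"
      using reduction q z b(1) by auto
    then show "sym_point q 0 \<nu>" using min_iff by blast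
  next
    assume "sym_point q 0 \<nu>"
    then show "global_minimizer \<beta> q z \<nu>"
      using q z b(1) min_iff[of 0] by (intro iffD2[OF reduction] bexI[of _ 0]) auto
  qed
qed

lemma u_mf_above_beta_crit:
  assumes b: "\<beta> > beta_crit q z"
  shows "0 < u_mf \<beta> q z" "u_mf \<beta> q z < 1" "mf_residual \<beta> q z (u_mf \<beta> q z) = 0"
    and "\<forall>v\<in>{0..1}. sym_energy \<beta> q z (u_mf \<beta> q z) \<le> sym_energy \<beta> q z v"
    and "sym_energy \<beta> q z (u_mf \<beta> q z) < sym_energy \<beta> q z 0"
proof -
  have b0: "\<beta> > 0" using b beta_crit_pos by simp
  obtain \<nu> where "global_minimizer \<beta> q z \<nu>" using global_minimizer_exists[of q z \<beta>] q z by auto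
  then obtain u where u: "u \<in> {0..<1}" "\<forall>v\<in>{0..1}. sym_energy \<beta> q z u \<le> sym_energy \<beta> q z v"
    using global_minimizer_iff_sym_energy_min[of q z \<beta> \<nu>] q z b0 by auto
  obtain u' where u': "0 < u'" "u' \<le> 1" "sym_energy \<beta> q z u' < sym_energy \<beta> q z 0"
    using sym_energy_less_0_above_beta_crit[OF b] by blast
  have "sym_energy \<beta> q z u \<le> sym_energy \<beta> q z u'" using u(2) u' by simp
  then have lt: "sym_energy \<beta> q z u < sym_energy \<beta> q z 0" using u'(3) by simp
  then have "u \<noteq> 0" by auto
  then have u0: "0 < u" "u < 1" using u(1) by auto
  have zero: "mf_residual \<beta> q z u = 0"
    using mf_residual_zero_at_interior_min[OF u0 u(2)] .
  have "u_mf \<beta> q z = u"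
    by (rule u_mf_eq_last_zero[OF u0 zero mf_residual_pos_beyond_min[OF b0 u0 zero lt]])
  then show "0 < u_mf \<beta> q z" "u_mf \<beta> q z < 1" "mf_residual \<beta> q z (u_mf \<beta> q z) = 0"
    and "\<forall>v\<in>{0..1}. sym_energy \<beta> q z (u_mf \<beta> q z) \<le> sym_energy \<beta> q z v"
    and "sym_energy \<beta> q z (u_mf \<beta> q z) < sym_energy \<beta> q z 0"
    using u0 zero u(2) lt by simp_all
qed

lemma global_minimizer_iff_above_beta_crit:
  assumes b: "\<beta> > beta_crit q z"
  shows "global_minimizer \<beta> q z \<nu> \<longleftrightarrow> sym_point q (u_mf \<beta> q z) \<nu>"
proof -
  have b0: "\<beta> > 0" using b beta_crit_pos by simp
  note umf = u_mf_above_beta_crit[OF b]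
  have uniq: "u = u_mf \<beta> q z" if u: "u \<in> {0..<1}" "\<forall>v\<in>{0..1}. sym_energy \<beta> q z u \<le> sym_energy \<beta> q z v" for u
  proof -
    have "sym_energy \<beta> q z u \<le> sym_energy \<beta> q z (u_mf \<beta> q z)" using u(2) umf(1,2) by simp
    then have lt: "sym_energy \<beta> q z u < sym_energy \<beta> q z 0" using umf(5) by simp
    then have "u \<noteq> 0" by auto
    then have u0: "0 < u" "u < 1" using u(1) by auto
    have zero: "mf_residual \<beta> q z u = 0"
      using mf_residual_zero_at_interior_min[OF u0 u(2)] .
    show ?thesis
    proof (rule ccontr)
      assume "u \<noteq> u_mf \<beta> q z"
      then consider "u < u_mf \<beta> q z" | "u_mf \<beta> q z < u" by linarith
      then show False
      proof cases
        case 1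
        then show False using mf_residual_pos_beyond_min[OF b0 u0 zero lt _ umf(2)] umf(3) by simp
      next
        case 2
        then show False using mf_residual_pos_beyond_min[OF b0 umf(1,2,3,5) _ u0(2)] zero by simp
      qed
    qed
  qed
  note reduction = global_minimizer_iff_sym_energy_min[of q z \<beta> \<nu>]
  show ?thesis
  proof
    assume "global_minimizer \<beta> q z \<nu>"
    then obtain u where "u \<in> {0..<1}" "sym_point q u \<nu>" "\<forall>v\<in>{0..1}. sym_energy \<beta> q z u \<le> sym_energy \<beta> q z v"
      using reduction q z b0 by auto
    then show "sym_point q (u_mf \<beta> q z) \<nu>" using uniq by metis
  next
    assume "sym_point q (u_mf \<beta> q z) \<nu>"
    then show "global_minimizer \<beta> q z \<nu>"
      using q z b0 umf by (intro iffD2[OF reduction] bexI[of _ "u_mf \<beta> q z"]) auto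
  qed
qed

section \<open>Continuity of the order parameter at the critical temperature\<close>

lemma weight_turning_point:
  obtains u\<^sub>0 where "0 \<le> u\<^sub>0"
    "\<And>x y. 0 \<le> x \<Longrightarrow> x < y \<Longrightarrow> y \<le> u\<^sub>0 \<Longrightarrow> weight (real q - 1) (z - 1) x < weight (real q - 1) (z - 1) y"
    "\<And>x y. u\<^sub>0 \<le> x \<Longrightarrow> x < y \<Longrightarrow> y < 1 \<Longrightarrow> weight (real q - 1) (z - 1) y < weight (real q - 1) (z - 1) x"
    "u\<^sub>0 = 0 \<longleftrightarrow> q = 2 \<and> z \<le> 4"
proof -
  have "real q - 1 \<ge> 1" "z - 1 \<ge> 1" using q z by simp_all
  moreover have "(real q - 1 = 1 \<and> z - 1 \<le> 3) \<longleftrightarrow> q = 2 \<and> z \<le> 4" using q by auto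
  ultimately show ?thesis
    using weight_unimodal[of "real q - 1" "z - 1"] that by (metis order_less_irrefl)
qed

lemma u_mf_bounded_away_from_0:
  assumes "\<not> (q = 2 \<and> z \<le> 4)"
  shows "\<exists>\<delta>>0. \<forall>\<beta>>beta_crit q z. u_mf \<beta> q z \<ge> \<delta>"
proof -
  define W where "W = weight (real q - 1) (z - 1)"
  obtain u\<^sub>0 where u\<^sub>0: "u\<^sub>0 > 0" "\<And>x y. 0 \<le> x \<Longrightarrow> x < y \<Longrightarrow> y \<le> u\<^sub>0 \<Longrightarrow> W x < W y"
    using weight_turning_point assms unfolding W_def by (metis order_le_less)
  have "u_mf \<beta> q z \<ge> u\<^sub>0" if b: "\<beta> > beta_crit q z" for \<beta>
  proof -
    note umf = u_mf_above_beta_crit[OF b]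
    obtain x1 x2 where x: "0 < x1" "x1 < x2" "x2 < u_mf \<beta> q z"
      and d: "mf_residual_deriv \<beta> q z x1 < 0" "mf_residual_deriv \<beta> q z x2 > 0"
      using mf_residual_deriv_sign_change_below_min[OF umf(1,2,3,5)] by blast
    define k where "k = kappa \<beta> q z"
    have "k > 0" using b beta_crit_pos q z by (simp add: k_def kappa_def)
    moreover have "k * W x1 > real q" "k * W x2 < real q"
      using d x umf(2) mf_residual_deriv_sign[of q _ \<beta> z] q by (auto simp: W_def k_def)
    ultimately have "W x2 < W x1" by (meson less_trans mult_less_cancel_left_pos)
    then have "x2 > u\<^sub>0" using u\<^sub>0(2)[of x1 x2] x by force
    then show ?thesis using x by simp
  qed
  then show ?thesis using u\<^sub>0(1) by blast
qed

text \<open>For \<open>q = 2\<close>, \<open>z \<le> 4\<close> the weight is decreasing, so wherever \<open>g'\<close> is nonpositive it is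
  negative to the left; \<open>g\<close> would then be negative there and some \<open>u > 0\<close> would beat \<open>0\<close>
  at \<open>\<beta>\<^sub>c\<close>.\<close>
lemma mf_residual_pos_at_beta_crit:
  assumes B: "q = 2 \<and> z \<le> 4" and u: "0 < u" "u < 1"
  shows "mf_residual (beta_crit q z) q z u > 0"
proof -
  define W where "W = weight (real q - 1) (z - 1)"
  define b where "b = beta_crit q z"
  define k where "k = kappa b q z"
  have W_dec: "W y < W x" if "0 \<le> x" "x < y" "y < 1" for x y
    using weight_turning_point B that unfolding W_def by metis
  have k: "k > 0" using beta_crit_pos q z by (simp add: k_def b_def kappa_def)
  have dpos: "mf_residual_deriv b q z x > 0" if x: "0 < x" "x < 1" for x
  proof (rule ccontr)
    assume "\<not> mf_residual_deriv b q z x > 0"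
    then have Wx: "k * W x \<ge> real q" using mf_residual_deriv_sign(2)[of q x b z] q x by (simp add: W_def k_def)
    have "mf_residual_deriv b q z y < 0" if "0 \<le> y" "y < x" for y
      using mult_strict_left_mono[OF W_dec[OF that x(2)] k] Wx mf_residual_deriv_sign(1)[of q y b z] q that x
      by (simp add: W_def k_def)
    then have "mf_residual b q z t < mf_residual b q z 0" if "0 < t" "t \<le> x" for t
      using that x has_real_derivative_mf_residual[of q _ b z] q
      by (intro DERIV_neg_imp_less[OF that(1), of _ "mf_residual_deriv b q z"]) auto
    then have "sym_energy b q z x < sym_energy b q z 0"
      using x q z by (intro sym_energy_strict_antimono_on) auto
    moreover have "sym_energy b q z 0 \<le> sym_energy b q z x"
      using sym_energy_0_le_at_beta_crit x by (simp add: b_def)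
    ultimately show False by simp
  qed
  have "mf_residual b q z 0 < mf_residual b q z u"
    using u dpos has_real_derivative_mf_residual[of q _ b z] q
    by (intro DERIV_pos_imp_less[OF u(1), of _ "mf_residual_deriv b q z"]) auto
  then show ?thesis by (simp add: b_def)
qed

lemma u_mf_tendsto_0_at_beta_crit:
  assumes B: "q = 2 \<and> z \<le> 4" and \<epsilon>: "\<epsilon> > 0"
  shows "\<exists>\<eta>>0. \<forall>\<beta>. beta_crit q z < \<beta> \<and> \<beta> < beta_crit q z + \<eta> \<longrightarrow> u_mf \<beta> q z < \<epsilon>"
proof -
  define W where "W = weight (real q - 1) (z - 1)"
  define b where "b = beta_crit q z"
  have W_dec: "W y < W x" if "0 \<le> x" "x < y" "y < 1" for x y
    using weight_turning_point B that unfolding W_def by metis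
  define e where "e = min \<epsilon> (1/2)"
  have e: "0 < e" "e < 1" "e \<le> \<epsilon>" using \<epsilon> by (auto simp: e_def)
  define K where "K = ((1 + (real q - 1) * e) powr (z - 1) - (1 - e) powr (z - 1)) / real q powr (z - 1)"
  have K: "K \<ge> 0"
  proof -
    have "(real q - 1) * e \<ge> 0" using q e by simp
    then have "(1 - e) powr (z - 1) \<le> (1 + (real q - 1) * e) powr (z - 1)"
      using e z by (intro powr_mono2) auto
    then show ?thesis unfolding K_def by simp
  qed
  \<comment> \<open>the residual at \<open>e\<close> is positive at \<open>\<beta>_c\<close> and depends affinely on \<open>\<beta>\<close> with slope \<open>-K\<close>\<close>
  define \<eta> where "\<eta> = mf_residual b q z e / (K + 1)"
  have \<eta>: "\<eta> > 0" using mf_residual_pos_at_beta_crit[OF B e(1,2)] K by (simp add: \<eta>_def b_def)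
  have small: "u_mf \<beta> q z < e" if \<beta>: "b < \<beta>" "\<beta> < b + \<eta>" for \<beta>
  proof (rule ccontr)
    assume "\<not> u_mf \<beta> q z < e"
    have "(\<beta> - b) * K < \<eta> * (K + 1)"
    proof -
      have "(\<beta> - b) * K \<le> (\<beta> - b) * (K + 1)" using \<beta> by simp
      also have "\<dots> < \<eta> * (K + 1)" using \<beta> K by simp
      finally show ?thesis .
    qed
    then have ge: "mf_residual \<beta> q z e > 0"
      using mf_residual_shift_beta[of \<beta> q z e b] K by (simp add: \<eta>_def K_def)
    note umf = u_mf_above_beta_crit[OF \<beta>(1)[unfolded b_def]]
    obtain x1 where x1: "0 < x1" "x1 < e"
      "mf_residual \<beta> q z e - mf_residual \<beta> q z 0 = (e - 0) * mf_residual_deriv \<beta> q z x1"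
      using MVT2[OF e(1), of "mf_residual \<beta> q z" "mf_residual_deriv \<beta> q z"]
        has_real_derivative_mf_residual[of q _ \<beta> z] q e by auto
    have k: "kappa \<beta> q z > 0" using \<beta> beta_crit_pos q z by (simp add: b_def kappa_def)
    have "mf_residual_deriv \<beta> q z x1 > 0" using x1 ge e by (simp add: zero_less_mult_iff)
    then have "kappa \<beta> q z * W x1 < real q"
      using mf_residual_deriv_sign(2)[of q x1 \<beta> z] q x1 e by (simp add: W_def)
    then have dpos: "mf_residual_deriv \<beta> q z t > 0" if "x1 < t" "t < 1" for t
      using mult_strict_left_mono[OF W_dec[of x1 t] k] that x1 mf_residual_deriv_sign(2)[of q t \<beta> z] q
      by (simp add: W_def)
    have "e \<noteq> u_mf \<beta> q z" using umf(3) ge by auto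
    then have eu: "e < u_mf \<beta> q z" using \<open>\<not> u_mf \<beta> q z < e\<close> by simp
    have "mf_residual \<beta> q z e < mf_residual \<beta> q z (u_mf \<beta> q z)"
    proof (rule DERIV_pos_imp_less[OF eu])
      fix x assume "e \<le> x" "x \<le> u_mf \<beta> q z"
      then show "(mf_residual \<beta> q z has_real_derivative mf_residual_deriv \<beta> q z x) (at x)"
        using has_real_derivative_mf_residual[of q x \<beta> z] q e umf(2) by simp
    next
      fix x assume "e < x" "x < u_mf \<beta> q z"
      then show "mf_residual_deriv \<beta> q z x > 0" using dpos x1 umf(2) by simp
    qed
    then show False using umf(3) ge by simp
  qed
  have "u_mf \<beta> q z < \<epsilon>" if "b < \<beta>" "\<beta> < b + \<eta>" for \<beta>
    using small[OF that] e(3) by simp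
  then show ?thesis using \<eta> by (auto simp: b_def)
qed

lemma u_mf_discontinuous_at_beta_crit_iff:
  "(\<not> (\<exists>L. ((\<lambda>\<beta>. if \<beta> < beta_crit q z then 0 else u_mf \<beta> q z) \<longlongrightarrow> L) (at (beta_crit q z))))
     \<longleftrightarrow> \<not> (q = 2 \<and> z \<le> 4)"
proof -
  define f where "f = (\<lambda>\<beta>. if \<beta> < beta_crit q z then 0 else u_mf \<beta> q z)"
  define b where "b = beta_crit q z"
  have left: "(f \<longlongrightarrow> 0) (at_left b)"
    by (rule tendsto_eventually, rule eventually_at_leftI[where a = "b - 1"]) (auto simp: f_def b_def)
  show ?thesis
  proof (cases "q = 2 \<and> z \<le> 4")
    case True
    have right: "(f \<longlongrightarrow> 0) (at_right b)"
    proof (rule order_tendstoI)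
      fix a :: real assume "a < 0"
      show "eventually (\<lambda>x. a < f x) (at_right b)"
      proof (rule eventually_at_rightI[where b = "b + 1"])
        fix x assume x: "x \<in> {b<..<b + 1}"
        then have "u_mf x q z > 0" using u_mf_above_beta_crit(1)[of x] by (simp add: b_def)
        then show "a < f x" using \<open>a < 0\<close> x by (simp add: f_def b_def)
      qed simp
    next
      fix a :: real assume "0 < a"
      then obtain \<eta> where "\<eta> > 0" "\<forall>\<beta>. b < \<beta> \<and> \<beta> < b + \<eta> \<longrightarrow> u_mf \<beta> q z < a"
        using u_mf_tendsto_0_at_beta_crit[OF True] by (auto simp: b_def)
      then show "eventually (\<lambda>x. f x < a) (at_right b)"
        by (intro eventually_at_rightI[where b = "b + \<eta>"]) (auto simp: f_def b_def)
    qed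
    then have "(f \<longlongrightarrow> 0) (at b)" using filterlim_split_at[OF left] by blast
    then show ?thesis using True by (auto simp: f_def b_def)
  next
    case False
    obtain \<delta> where \<delta>: "\<delta> > 0" "\<forall>\<beta>>b. u_mf \<beta> q z \<ge> \<delta>"
      using u_mf_bounded_away_from_0[OF False] by (auto simp: b_def)
    have "\<not> (f \<longlongrightarrow> L) (at b)" for L
    proof
      assume "(f \<longlongrightarrow> L) (at b)"
      then have Ll: "(f \<longlongrightarrow> L) (at_left b)" and Lr: "(f \<longlongrightarrow> L) (at_right b)"
        using filterlim_at_split by auto
      have "eventually (\<lambda>x. \<delta> \<le> f x) (at_right b)"
        using \<delta> by (intro eventually_at_rightI[where b = "b + 1"]) (auto simp: f_def b_def)
      then have "\<delta> \<le> L" using tendsto_lowerbound[OF Lr] by simp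
      moreover have "L = 0" using tendsto_unique[OF _ Ll left] by simp
      ultimately show False using \<delta> by simp
    qed
    then show ?thesis using False by (simp add: f_def b_def)
  qed
qed

end

theorem theorem5p1:
  fixes q :: nat and z :: real
  assumes "q \<ge> 2" and "z \<ge> 2"
  shows "(\<forall>\<beta>\<ge>0. \<forall>\<nu>. global_minimizer \<beta> q z \<nu> \<longrightarrow>
            (\<exists>u\<in>{0..<1}. sym_point q u \<nu>))
       \<and> (\<exists>\<beta>c>0.
            (\<forall>\<beta>. 0 \<le> \<beta> \<and> \<beta> < \<beta>c \<longrightarrow>
               (\<forall>\<nu>. global_minimizer \<beta> q z \<nu> \<longleftrightarrow> sym_point q 0 \<nu>))
          \<and> (\<forall>\<beta>>\<beta>c.
               (\<forall>\<nu>. global_minimizer \<beta> q z \<nu> \<longleftrightarrow> sym_point q (u_mf \<beta> q z) \<nu>))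
          \<and> ((\<not> (\<exists>L. ((\<lambda>\<beta>. if \<beta> < \<beta>c then 0 else u_mf \<beta> q z) \<longlongrightarrow> L) (at \<beta>c)))
               \<longleftrightarrow> \<not> (q = 2 \<and> z \<le> 4)))"
proof (intro conjI allI impI exI[of _ "beta_crit q z"])
  fix \<beta> \<nu> assume "\<beta> \<ge> 0" "global_minimizer \<beta> q z \<nu>"
  then show "\<exists>u\<in>{0..<1}. sym_point q u \<nu>"
    using global_minimizer_sym_point[of q z \<beta> \<nu>] assms by simp
qed (use assms beta_crit_pos global_minimizer_iff_below_beta_crit global_minimizer_iff_above_beta_crit
      u_mf_discontinuous_at_beta_crit_iff in auto)

end
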